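(* Let $V$ be an $n$-dimensional real vector space and $\mu\in(V^* )^{\wedge p}$ a nonzero exterior $p$-form of rank $r$, with kernel $Z$ and divisibility space $D$, so that $\dim Z=n-r$; set $s=n-\dim D$ (one has $s\le r$). Then: (a) $s\neq p-1$ and $s\le p$, with $s=p$ if and only if $\mu$ is decomposable; (b) for any basis $\xi^1,\dots,\xi^n$ of $V^*$ such that $\xi^1,\dots,\xi^s$ is a basis of the polar space $D'$ of $D$, one has $\mu=\xi^1\wedge\dots\wedge\xi^s\wedge\zeta$, where the $(p-s)$-form $\zeta$ is indivisible and is a linear combination of $(p-s)$-fold exterior products of $1$-forms from $\{\xi^{s+1},\dots,\xi^n\}$; (c) if $\mu=\xi^1\wedge\dots\wedge\xi^s\wedge\zeta$ for some basis $\xi^1,\dots,\xi^s$ of $D'$ and some exterior $(p-s)$-form $\zeta$, then the restriction of any such $\zeta$ to $D$ is uniquely determined by $\mu$ up to a nonzero scalar factor; (d) this restriction of $\zeta$ to $D$ is indivisible in $D$.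
   Context: The rank of $\mu$ is the minimum dimension of a vector space $W$ such that $\mu$ is the pullback of an exterior $p$-form on $W$ under some linear map $V\to W$. The kernel of $\mu$ is $Z=\{v\in V:\mu(v,\cdot,\dots,\cdot)=0\}$. The divisibility space $D$ is the common kernel of all $\xi\in V^*$ with $\xi\wedge\mu=0$; $D'=\{\xi\in V^*:\xi\wedge\mu=0\}$ is its polar space. A $p$-form is decomposable if it is an exterior product of $p$ $1$-forms. A form is indivisible (in a space) if its divisibility space is the whole space, i.e. $\xi\wedge\mu\neq0$ for all nonzero $1$-forms $\xi$; a nonzero $0$-form is indivisible. *)

theory Defs
  imports "HOL-Analysis.Analysis"
begin

text \<open>Exterior p-forms on a finite-dimensional real vector space 'v (euclidean_space, only its
  real vector space structure is used) are represented as alternating multilinear maps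
  \<open>(nat \<Rightarrow> 'v) \<Rightarrow> real\<close> depending only on the arguments with index < p.
  1-forms (elements of V*) are linear maps \<open>'v \<Rightarrow> real\<close>.\<close>

definition is_form :: "nat \<Rightarrow> ((nat \<Rightarrow> 'v::real_vector) \<Rightarrow> real) \<Rightarrow> bool" where
  "is_form p \<mu> \<longleftrightarrow>
     (\<forall>v w. (\<forall>i<p. v i = w i) \<longrightarrow> \<mu> v = \<mu> w) \<and>
     (\<forall>i<p. \<forall>v. linear (\<lambda>x. \<mu> (v(i := x)))) \<and>
     (\<forall>v i j. i < p \<and> j < p \<and> i \<noteq> j \<and> v i = v j \<longrightarrow> \<mu> v = 0)"

text \<open>Exterior product (normalisation 1/(p! q!), so that products of 1-forms are determinants).\<close>
definition wedge :: "nat \<Rightarrow> nat \<Rightarrow> ((nat \<Rightarrow> 'v) \<Rightarrow> real) \<Rightarrow> ((nat \<Rightarrow> 'v) \<Rightarrow> real)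
    \<Rightarrow> (nat \<Rightarrow> 'v) \<Rightarrow> real" where
  "wedge p q \<alpha> \<beta> v =
     (\<Sum>\<sigma> | \<sigma> permutes {..<p+q}.
        of_int (sign \<sigma>) * \<alpha> (v \<circ> \<sigma>) * \<beta> (\<lambda>i. v (\<sigma> (p + i)))) / (fact p * fact q)"

definition one_form :: "('v \<Rightarrow> real) \<Rightarrow> (nat \<Rightarrow> 'v) \<Rightarrow> real" where
  "one_form \<xi> v = \<xi> (v 0)"

definition wedge_list :: "nat \<Rightarrow> (nat \<Rightarrow> 'v \<Rightarrow> real) \<Rightarrow> (nat \<Rightarrow> 'v) \<Rightarrow> real" where
  "wedge_list k \<xi> v = (\<Sum>\<sigma> | \<sigma> permutes {..<k}. of_int (sign \<sigma>) * (\<Prod>i<k. \<xi> i (v (\<sigma> i))))"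

text \<open>Decomposable: an exterior product of p 1-forms (a scalar factor is allowed, which
  only matters for p = 0).\<close>
definition decomposable :: "nat \<Rightarrow> ((nat \<Rightarrow> 'v::real_vector) \<Rightarrow> real) \<Rightarrow> bool" where
  "decomposable p \<mu> \<longleftrightarrow>
     (\<exists>c \<xi>. (\<forall>i<p. linear (\<xi> i)) \<and> \<mu> = (\<lambda>v. c * wedge_list p \<xi> v))"

text \<open>Kernel: vectors whose contraction with \<mu> vanishes (for p = 0 the contraction is 0).\<close>
definition form_kernel :: "nat \<Rightarrow> ((nat \<Rightarrow> 'v::real_vector) \<Rightarrow> real) \<Rightarrow> 'v set" where
  "form_kernel p \<mu> = {x. p = 0 \<or> (\<forall>w. \<mu> (w(0 := x)) = 0)}"

text \<open>Rank: minimal dimension of W such that \<mu> is a pullback of a p-form on W under a linear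
  map V \<rightarrow> W.  Since the minimal such W has dimension at most dim V, it suffices to let W range
  over subspaces of V.  A p-form on W is represented by (the restriction of) a p-form on V.\<close>
definition form_rank :: "nat \<Rightarrow> ((nat \<Rightarrow> 'v::euclidean_space) \<Rightarrow> real) \<Rightarrow> nat" where
  "form_rank p \<mu> = (LEAST d. \<exists>(W::'v set) (f::'v \<Rightarrow> 'v) \<nu>. subspace W \<and> dim W = d \<and> linear f \<and> range f \<subseteq> W \<and>
       is_form p \<nu> \<and> (\<forall>v. \<mu> v = \<nu> (f \<circ> v)))"

text \<open>Divisibility space of a q-form \<mu> restricted to a subspace U: common kernel (in U) of all
  1-forms \<eta> on U with \<eta> \<and> \<mu> = 0 on U.  (1-forms on U are restrictions of 1-forms on V.)\<close>
definition div_space :: "'v::real_vector set \<Rightarrow> nat \<Rightarrow> ((nat \<Rightarrow> 'v) \<Rightarrow> real) \<Rightarrow> 'v set" where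
  "div_space U q \<mu> = {x \<in> U. \<forall>\<eta>. linear \<eta> \<and>
       (\<forall>v. (\<forall>i<q+1. v i \<in> U) \<longrightarrow> wedge 1 q (one_form \<eta>) \<mu> v = 0) \<longrightarrow> \<eta> x = 0}"

definition indivisible_in :: "'v::real_vector set \<Rightarrow> nat \<Rightarrow> ((nat \<Rightarrow> 'v) \<Rightarrow> real) \<Rightarrow> bool" where
  "indivisible_in U q \<mu> \<longleftrightarrow> div_space U q \<mu> = U"

definition div_polar :: "nat \<Rightarrow> ((nat \<Rightarrow> 'v::real_vector) \<Rightarrow> real) \<Rightarrow> ('v \<Rightarrow> real) set" where
  "div_polar p \<mu> = {\<xi>. linear \<xi> \<and> wedge 1 p (one_form \<xi>) \<mu> = (\<lambda>v. 0)}"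

definition fun_lin_indep :: "nat \<Rightarrow> (nat \<Rightarrow> 'v \<Rightarrow> real) \<Rightarrow> bool" where
  "fun_lin_indep k \<xi> \<longleftrightarrow> (\<forall>c. (\<forall>x. (\<Sum>i<k. c i * \<xi> i x) = 0) \<longrightarrow> (\<forall>i<k. c i = 0))"

definition fun_basis_of :: "nat \<Rightarrow> (nat \<Rightarrow> 'v::real_vector \<Rightarrow> real) \<Rightarrow> ('v \<Rightarrow> real) set \<Rightarrow> bool" where
  "fun_basis_of k \<xi> S \<longleftrightarrow> (\<forall>i<k. \<xi> i \<in> S) \<and> fun_lin_indep k \<xi> \<and>
     (\<forall>\<eta>\<in>S. \<exists>c. \<forall>x. \<eta> x = (\<Sum>i<k. c i * \<xi> i x))"

end

(*
  Choose a basis xi_1, ..., xi_s of D' and vectors e_1, ..., e_s with xi_k(e_j) = delta_kj, so that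
  V is the direct sum of span{e_j} and the common kernel D of the xi_k.  Since xi_k /\ mu = 0, the
  form mu vanishes as soon as xi_k vanishes on all of its arguments; by multilinearity and
  alternation, mu is therefore determined by the (p - s)-form mu(e_1, ..., e_s, -) on D.  This
  gives s <= p, the factorisation mu = xi_1 /\ ... /\ xi_s /\ zeta for every zeta agreeing with
  mu(e_1, ..., e_s, -) on D, and the uniqueness of zeta on D up to the factor
  (xi_1 /\ ... /\ xi_s)(e'_1, ..., e'_s) relating two such choices.  If a 1-form eta that is nonzero
  on D divided zeta on D, then eta - sum_k eta(e_k) xi_k would be a further element of D', so zeta is
  indivisible on D (and then on V).  For p = s + 1 the factor is a 1-form and mu is decomposable;
  conversely the factors of a decomposable mu lie in D', which forces s = p.

  Finally mu does not change when kernel vectors are added to its arguments, so it is the pullback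
  of itself along the orthogonal projection onto the complement of Z, whence r = n - dim Z; and
  Z is contained in D because a 1-form in D' that is nonzero on Z would force mu = 0.
*)
theory Submission
  imports Defs
begin

section \<open>Alternating multilinear forms\<close>

lemma form_cong: "is_form p \<mu> \<Longrightarrow> (\<And>i. i < p \<Longrightarrow> v i = w i) \<Longrightarrow> \<mu> v = \<mu> w"
  unfolding is_form_def by blast

lemma form_linear_arg: "is_form p \<mu> \<Longrightarrow> i < p \<Longrightarrow> linear (\<lambda>x. \<mu> (v(i := x)))"
  unfolding is_form_def by blast

lemma form_alternating: "is_form p \<mu> \<Longrightarrow> i < p \<Longrightarrow> j < p \<Longrightarrow> i \<noteq> j \<Longrightarrow> v i = v j \<Longrightarrow> \<mu> v = 0"
  unfolding is_form_def by blast

lemma form_add_arg: "is_form p \<mu> \<Longrightarrow> i < p \<Longrightarrow> \<mu> (v(i := x + y)) = \<mu> (v(i := x)) + \<mu> (v(i := y))"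
  using form_linear_arg[of p \<mu> i v] by (simp add: linear_iff)

lemma form_scale_arg: "is_form p \<mu> \<Longrightarrow> i < p \<Longrightarrow> \<mu> (v(i := c *\<^sub>R x)) = c * \<mu> (v(i := x))"
  using form_linear_arg[of p \<mu> i v] by (simp add: linear_iff)

lemma is_form_zero: "is_form p (\<lambda>v. 0)"
  by (simp add: is_form_def linear_iff)

lemma linear_mult_left_real: "linear (f :: 'a::real_vector \<Rightarrow> real) \<Longrightarrow> linear (\<lambda>x. c * f x)"
  by (simp add: linear_iff algebra_simps)

lemma linear_mult_right_real: "linear (f :: 'a::real_vector \<Rightarrow> real) \<Longrightarrow> linear (\<lambda>x. f x * c)"
  by (simp add: linear_iff algebra_simps)

lemma linear_divide_real: "linear (f :: 'a::real_vector \<Rightarrow> real) \<Longrightarrow> linear (\<lambda>x. f x / c)"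
  by (simp add: linear_iff add_divide_distrib)

lemma is_form_cmul: "is_form p f \<Longrightarrow> is_form p (\<lambda>v. c * f v)"
  unfolding is_form_def by (auto intro: linear_mult_left_real)

lemma is_form_sum:
  fixes G :: "'f \<Rightarrow> (nat \<Rightarrow> 'a::real_vector) \<Rightarrow> real"
  assumes fin: "finite F" and forms: "\<And>f. f \<in> F \<Longrightarrow> is_form q (G f)"
  shows "is_form q (\<lambda>v. \<Sum>f\<in>F. c f * G f v)"
  unfolding is_form_def
proof (intro conjI allI impI)
  fix v w :: "nat \<Rightarrow> 'a" assume "\<forall>i<q. v i = w i"
  then show "(\<Sum>f\<in>F. c f * G f v) = (\<Sum>f\<in>F. c f * G f w)"
    using forms by (intro sum.cong refl) (metis form_cong)
next
  fix i v assume "i < q"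
  then show "linear (\<lambda>x. \<Sum>f\<in>F. c f * G f (v(i := x)))"
    by (intro linear_compose_sum ballI linear_mult_left_real form_linear_arg[OF forms])
next
  fix v :: "nat \<Rightarrow> 'a" and i j assume "i < q \<and> j < q \<and> i \<noteq> j \<and> v i = v j"
  then show "(\<Sum>f\<in>F. c f * G f v) = 0"
    using forms by (intro sum.neutral ballI) (metis form_alternating mult_zero_right)
qed

lemma form_transpose:
  assumes form: "is_form p \<mu>" and ij: "i < p" "j < p" "i \<noteq> j"
  shows "\<mu> (v \<circ> Transposition.transpose i j) = - \<mu> v"
proof -
  define x y where "x = v i" and "y = v j"
  have upd: "\<And>a b. v(i := a, j := b) = (v(j := b))(i := a)" using ij by (auto simp: fun_eq_iff)
  have "0 = \<mu> ((v(j := x + y))(i := x + y))"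
    by (rule form_alternating[OF form ij, symmetric]) (use ij in auto)
  also have "\<dots> = \<mu> ((v(j := x + y))(i := x)) + \<mu> ((v(j := x + y))(i := y))"
    by (rule form_add_arg[OF form ij(1)])
  also have "\<mu> ((v(j := x + y))(i := x)) = \<mu> ((v(i := x))(j := x + y))" using upd by simp
  also have "\<dots> = \<mu> ((v(i := x))(j := x)) + \<mu> ((v(i := x))(j := y))"
    by (rule form_add_arg[OF form ij(2)])
  also have "\<mu> ((v(j := x + y))(i := y)) = \<mu> ((v(i := y))(j := x + y))" using upd by simp
  also have "\<dots> = \<mu> ((v(i := y))(j := x)) + \<mu> ((v(i := y))(j := y))"
    by (rule form_add_arg[OF form ij(2)])
  also have "\<mu> ((v(i := x))(j := x)) = 0"
    by (rule form_alternating[OF form ij]) (use ij in simp)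
  also have "\<mu> ((v(i := y))(j := y)) = 0"
    by (rule form_alternating[OF form ij]) (use ij in simp)
  also have "(v(i := x))(j := y) = v" by (auto simp: x_def y_def fun_eq_iff)
  also have "(v(i := y))(j := x) = v \<circ> Transposition.transpose i j"
    using ij by (auto simp: x_def y_def fun_eq_iff Transposition.transpose_def)
  finally show ?thesis by (simp add: o_def)
qed

lemma permutes_lessThan: "\<sigma> permutes {..<n} \<Longrightarrow> k < n \<Longrightarrow> \<sigma> k < n"
  using permutes_in_image[of \<sigma> "{..<n}" k] by simp

lemma sign_mult_self_real [simp]: "real_of_int (sign \<sigma>) * real_of_int (sign \<sigma>) = 1"
  by (metis of_int_mult of_int_1 sign_idempotent)

lemma sign_permute_if_transpose_neg:
  assumes fin: "finite A" and \<sigma>: "\<sigma> permutes A"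
    and neg: "\<And>u a b. a \<in> A \<Longrightarrow> b \<in> A \<Longrightarrow> a \<noteq> b \<Longrightarrow> g (u \<circ> Transposition.transpose a b) = - g u"
  shows "g (u \<circ> \<sigma>) = of_int (sign \<sigma>) * g u"
  using \<sigma> fin
proof (induction arbitrary: u rule: permutes_induct)
  case id
  then show ?case by (simp add: sign_id)
next
  case (swap a b \<pi>)
  have sign: "sign (Transposition.transpose a b \<circ> \<pi>) = - sign \<pi>"
    using swap permutes_imp_permutation[OF fin]
    by (simp add: sign_compose sign_swap_id permutation_swap_id)
  have "g (u \<circ> (Transposition.transpose a b \<circ> \<pi>)) = g ((u \<circ> Transposition.transpose a b) \<circ> \<pi>)"
    by (simp only: comp_assoc)
  also have "\<dots> = of_int (sign \<pi>) * g (u \<circ> Transposition.transpose a b)"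
    by (rule swap.IH)
  also have "g (u \<circ> Transposition.transpose a b) = - g u"
    by (rule neg) (use swap in auto)
  finally show ?case unfolding sign by simp
qed

lemma form_permute:
  assumes form: "is_form p \<mu>" and \<sigma>: "\<sigma> permutes {..<p}"
  shows "\<mu> (v \<circ> \<sigma>) = of_int (sign \<sigma>) * \<mu> v"
proof (rule sign_permute_if_transpose_neg[OF _ \<sigma>])
  show "\<mu> (u \<circ> Transposition.transpose a b) = - \<mu> u" if "a \<in> {..<p}" "b \<in> {..<p}" "a \<noteq> b" for u a b
    using form_transpose[OF form] that by simp
qed simp

section \<open>Exterior products\<close>

lemma wedge_list_permute:
  assumes \<tau>: "\<tau> permutes {..<s}"
  shows "wedge_list s \<xi> (v \<circ> \<tau>) = of_int (sign \<tau>) * wedge_list s \<xi> v"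
proof -
  let ?P = "{\<sigma>. \<sigma> permutes {..<s}}"
  let ?f = "\<lambda>\<sigma>. of_int (sign \<sigma>) * (\<Prod>i<s. \<xi> i ((v \<circ> \<tau>) (\<sigma> i)))"
  have "wedge_list s \<xi> (v \<circ> \<tau>) = (\<Sum>\<sigma>\<in>?P. ?f (inv \<tau> \<circ> \<sigma>))"
    unfolding wedge_list_def by (rule setum_permutations_compose_left[OF permutes_inv[OF \<tau>]])
  also have "\<dots> = (\<Sum>\<sigma>\<in>?P. of_int (sign \<tau>) * (of_int (sign \<sigma>) * (\<Prod>i<s. \<xi> i (v (\<sigma> i)))))"
  proof (rule sum.cong[OF refl])
    fix \<sigma> assume "\<sigma> \<in> ?P"
    then have "sign (inv \<tau> \<circ> \<sigma>) = sign \<tau> * sign \<sigma>"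
      using permutes_imp_permutation[OF _ \<tau>] permutes_imp_permutation[of "{..<s}" \<sigma>]
      by (simp add: sign_compose sign_inverse permutation_inverse)
    moreover have "(v \<circ> \<tau>) ((inv \<tau> \<circ> \<sigma>) i) = v (\<sigma> i)" for i
      using permutes_inverses(1)[OF \<tau>] by simp
    ultimately show "?f (inv \<tau> \<circ> \<sigma>) = of_int (sign \<tau>) * (of_int (sign \<sigma>) * (\<Prod>i<s. \<xi> i (v (\<sigma> i))))"
      by simp
  qed
  also have "\<dots> = of_int (sign \<tau>) * wedge_list s \<xi> v"
    unfolding wedge_list_def by (simp add: sum_distrib_left)
  finally show ?thesis .
qed

lemma is_form_wedge_list:
  assumes lin: "\<And>k. k < s \<Longrightarrow> linear (\<xi> k)"
  shows "is_form s (wedge_list s \<xi>)"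
  unfolding is_form_def
proof (intro conjI allI impI)
  fix v w :: "nat \<Rightarrow> 'a" assume "\<forall>i<s. v i = w i"
  then show "wedge_list s \<xi> v = wedge_list s \<xi> w"
    unfolding wedge_list_def
    by (intro sum.cong refl arg_cong2[where f="(*)"] prod.cong) (auto simp: permutes_lessThan)
next
  fix i v assume i: "i < s"
  show "linear (\<lambda>x. wedge_list s \<xi> (v(i := x)))"
    unfolding wedge_list_def
  proof (rule linear_compose_sum, rule ballI)
    fix \<sigma> assume "\<sigma> \<in> {\<sigma>. \<sigma> permutes {..<s}}"
    then have \<sigma>: "\<sigma> permutes {..<s}" by simp
    define k0 where "k0 = inv \<sigma> i"
    have k0: "k0 < s" "\<sigma> k0 = i"
      using i permutes_inverses(1)[OF \<sigma>] permutes_lessThan[OF permutes_inv[OF \<sigma>]]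
      by (auto simp: k0_def)
    have other: "k < s \<Longrightarrow> k \<noteq> k0 \<Longrightarrow> \<sigma> k \<noteq> i" for k
      using k0 permutes_inj[OF \<sigma>] by (auto dest: injD)
    have "(\<Prod>k<s. \<xi> k ((v(i := x)) (\<sigma> k))) = \<xi> k0 x * (\<Prod>k\<in>{..<s} - {k0}. \<xi> k (v (\<sigma> k)))" for x
    proof -
      have "(\<Prod>k<s. \<xi> k ((v(i := x)) (\<sigma> k))) =
            \<xi> k0 ((v(i := x)) (\<sigma> k0)) * (\<Prod>k\<in>{..<s} - {k0}. \<xi> k ((v(i := x)) (\<sigma> k)))"
        using k0 by (subst prod.remove[of _ k0]) auto
      also have "\<dots> = \<xi> k0 x * (\<Prod>k\<in>{..<s} - {k0}. \<xi> k (v (\<sigma> k)))"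
        using k0 other by (intro arg_cong2[where f="(*)"] prod.cong) auto
      finally show ?thesis .
    qed
    then show "linear (\<lambda>x. of_int (sign \<sigma>) * (\<Prod>k<s. \<xi> k ((v(i := x)) (\<sigma> k))))"
      using lin[OF k0(1)] by (simp only:) (intro linear_mult_left_real linear_mult_right_real)
  qed
next
  fix v :: "nat \<Rightarrow> 'a" and i j assume ij: "i < s \<and> j < s \<and> i \<noteq> j \<and> v i = v j"
  then have "v \<circ> Transposition.transpose i j = v"
    by (auto simp: fun_eq_iff Transposition.transpose_def)
  moreover have "wedge_list s \<xi> (v \<circ> Transposition.transpose i j) = - wedge_list s \<xi> v"
    using wedge_list_permute[of "Transposition.transpose i j" s \<xi> v] ij
    by (simp add: permutes_swap_id sign_swap_id)
  ultimately show "wedge_list s \<xi> v = 0" by simp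
qed

lemma wedge_list_eq_0_row:
  assumes k: "k < s" and zero: "\<And>i. i < s \<Longrightarrow> \<xi> k (v i) = 0"
  shows "wedge_list s \<xi> v = 0"
  unfolding wedge_list_def
proof (rule sum.neutral, rule ballI)
  fix \<sigma> assume "\<sigma> \<in> {\<sigma>. \<sigma> permutes {..<s}}"
  then have "\<xi> k (v (\<sigma> k)) = 0" using zero permutes_lessThan k by auto
  then show "of_int (sign \<sigma>) * (\<Prod>i<s. \<xi> i (v (\<sigma> i))) = 0"
    using k by (simp add: prod_zero_iff) blast
qed

lemma wedge_list_eq_0_col:
  assumes i: "i < s" and zero: "\<And>k. k < s \<Longrightarrow> \<xi> k (v i) = 0"
  shows "wedge_list s \<xi> v = 0"
  unfolding wedge_list_def
proof (rule sum.neutral, rule ballI)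
  fix \<sigma> assume "\<sigma> \<in> {\<sigma>. \<sigma> permutes {..<s}}"
  then have \<sigma>: "\<sigma> permutes {..<s}" by simp
  have "inv \<sigma> i < s" "\<sigma> (inv \<sigma> i) = i"
    using i permutes_inverses(1)[OF \<sigma>] permutes_lessThan[OF permutes_inv[OF \<sigma>]] by auto
  then have "\<exists>k\<in>{..<s}. \<xi> k (v (\<sigma> k)) = 0" using zero by force
  then show "of_int (sign \<sigma>) * (\<Prod>k<s. \<xi> k (v (\<sigma> k))) = 0" by (simp add: prod_zero_iff)
qed

lemma wedge_list_diagonal:
  assumes zero: "\<And>k i. k < s \<Longrightarrow> i < s \<Longrightarrow> i \<noteq> k \<Longrightarrow> \<xi> k (v i) = 0"
  shows "wedge_list s \<xi> v = (\<Prod>k<s. \<xi> k (v k))"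
proof -
  let ?P = "{\<sigma>. \<sigma> permutes {..<s}}"
  let ?f = "\<lambda>\<sigma>. of_int (sign \<sigma>) * (\<Prod>k<s. \<xi> k (v (\<sigma> k)))"
  have "?f \<sigma> = 0" if "\<sigma> \<in> ?P - {id}" for \<sigma>
  proof -
    from that have \<sigma>: "\<sigma> permutes {..<s}" and "\<sigma> \<noteq> id" by auto
    then obtain k where "\<sigma> k \<noteq> k" by (auto simp: fun_eq_iff)
    then have "k < s" "\<xi> k (v (\<sigma> k)) = 0"
      using permutes_not_in[OF \<sigma>, of k] zero permutes_lessThan[OF \<sigma>] by auto
    then show ?thesis by (simp add: prod_zero_iff) blast
  qed
  then have "sum ?f ?P = sum ?f {id}"
    by (intro sum.mono_neutral_right) (auto simp: finite_permutations permutes_id)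
  then show ?thesis unfolding wedge_list_def by simp
qed

lemma wedge_list_dual:
  assumes dual: "\<And>k i. k < s \<Longrightarrow> i < s \<Longrightarrow> \<xi> k (v i) = (if i = k then 1 else 0)"
  shows "wedge_list s \<xi> v = 1"
  using dual by (subst wedge_list_diagonal) auto

lemma one_form_eq_wedge_list: "one_form \<eta> = wedge_list 1 (\<lambda>_. \<eta>)"
proof -
  have "{\<sigma>. \<sigma> permutes {..<Suc 0}} = {id}" by (auto simp: lessThan_Suc)
  then show ?thesis by (auto simp: fun_eq_iff one_form_def wedge_list_def)
qed

lemma is_form_one_form: "linear \<eta> \<Longrightarrow> is_form 1 (one_form \<eta>)"
  unfolding one_form_eq_wedge_list by (rule is_form_wedge_list)

lemma wedge_permute:
  assumes \<tau>: "\<tau> permutes {..<p+q}"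
  shows "wedge p q \<alpha> \<beta> (v \<circ> \<tau>) = of_int (sign \<tau>) * wedge p q \<alpha> \<beta> v"
proof -
  let ?P = "{\<sigma>. \<sigma> permutes {..<p+q}}"
  let ?f = "\<lambda>\<sigma>. of_int (sign \<sigma>) * \<alpha> ((v \<circ> \<tau>) \<circ> \<sigma>) * \<beta> (\<lambda>i. (v \<circ> \<tau>) (\<sigma> (p + i)))"
  have "(\<Sum>\<sigma>\<in>?P. ?f \<sigma>) = (\<Sum>\<sigma>\<in>?P. ?f (inv \<tau> \<circ> \<sigma>))"
    by (rule setum_permutations_compose_left[OF permutes_inv[OF \<tau>]])
  also have "\<dots> = (\<Sum>\<sigma>\<in>?P. of_int (sign \<tau>) * (of_int (sign \<sigma>) * \<alpha> (v \<circ> \<sigma>) * \<beta> (\<lambda>i. v (\<sigma> (p + i)))))"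
  proof (rule sum.cong[OF refl])
    fix \<sigma> assume "\<sigma> \<in> ?P"
    then have "sign (inv \<tau> \<circ> \<sigma>) = sign \<tau> * sign \<sigma>"
      using permutes_imp_permutation[OF _ \<tau>] permutes_imp_permutation[of "{..<p+q}" \<sigma>]
      by (simp add: sign_compose sign_inverse permutation_inverse)
    moreover have "(v \<circ> \<tau>) \<circ> (inv \<tau> \<circ> \<sigma>) = v \<circ> \<sigma>"
      using permutes_inverses(1)[OF \<tau>] by (simp add: fun_eq_iff)
    ultimately show "?f (inv \<tau> \<circ> \<sigma>) = of_int (sign \<tau>) * (of_int (sign \<sigma>) * \<alpha> (v \<circ> \<sigma>) * \<beta> (\<lambda>i. v (\<sigma> (p + i))))"
      using permutes_inverses(1)[OF \<tau>] by simp
  qed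
  finally show ?thesis
    unfolding wedge_def by (simp add: sum_distrib_left)
qed

lemma is_form_wedge:
  assumes \<alpha>: "is_form p \<alpha>" and \<beta>: "is_form q \<beta>"
  shows "is_form (p+q) (wedge p q \<alpha> \<beta>)"
  unfolding is_form_def
proof (intro conjI allI impI)
  fix v w :: "nat \<Rightarrow> 'a" assume vw: "\<forall>i<p+q. v i = w i"
  have "\<alpha> (v \<circ> \<sigma>) = \<alpha> (w \<circ> \<sigma>) \<and> \<beta> (\<lambda>i. v (\<sigma> (p + i))) = \<beta> (\<lambda>i. w (\<sigma> (p + i)))"
    if "\<sigma> permutes {..<p+q}" for \<sigma>
    using vw permutes_lessThan[OF that] by (intro conjI form_cong[OF \<alpha>] form_cong[OF \<beta>]) auto
  then show "wedge p q \<alpha> \<beta> v = wedge p q \<alpha> \<beta> w"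
    unfolding wedge_def by (intro arg_cong2[where f="(/)"] sum.cong) auto
next
  fix i v assume i: "i < p+q"
  show "linear (\<lambda>x. wedge p q \<alpha> \<beta> (v(i := x)))"
    unfolding wedge_def
  proof (rule linear_divide_real, rule linear_compose_sum, rule ballI)
    fix \<sigma> assume "\<sigma> \<in> {\<sigma>. \<sigma> permutes {..<p+q}}"
    then have \<sigma>: "\<sigma> permutes {..<p+q}" by simp
    define j where "j = inv \<sigma> i"
    have j: "j < p+q" "\<sigma> j = i"
      using i permutes_inverses(1)[OF \<sigma>] permutes_lessThan[OF permutes_inv[OF \<sigma>]] by (auto simp: j_def)
    have \<sigma>j: "\<sigma> m = i \<longleftrightarrow> m = j" for m
      using j permutes_inj[OF \<sigma>] by (auto dest: injD)
    have upd: "(v(i := x)) \<circ> \<sigma> = (v \<circ> \<sigma>)(j := x)" for x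
      using \<sigma>j by (auto simp: fun_eq_iff)
    show "linear (\<lambda>x. of_int (sign \<sigma>) * \<alpha> ((v(i := x)) \<circ> \<sigma>) * \<beta> (\<lambda>k. (v(i := x)) (\<sigma> (p + k))))"
    proof (cases "j < p")
      case True
      have "\<beta> (\<lambda>k. (v(i := x)) (\<sigma> (p + k))) = \<beta> (\<lambda>k. v (\<sigma> (p + k)))" for x
        by (rule form_cong[OF \<beta>]) (use \<sigma>j True in auto)
      then show ?thesis unfolding upd
        using form_linear_arg[OF \<alpha> True, of "v \<circ> \<sigma>"]
        by (simp only:) (intro linear_mult_left_real linear_mult_right_real)
    next
      case False
      have "\<alpha> ((v \<circ> \<sigma>)(j := x)) = \<alpha> (v \<circ> \<sigma>)" for x
        by (rule form_cong[OF \<alpha>]) (use False in auto)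
      moreover have "(\<lambda>k. (v(i := x)) (\<sigma> (p + k))) = (\<lambda>k. v (\<sigma> (p + k)))(j - p := x)" for x
        using \<sigma>j False by (auto simp: fun_eq_iff)
      moreover have "linear (\<lambda>x. \<beta> ((\<lambda>k. v (\<sigma> (p + k)))(j - p := x)))"
        by (rule form_linear_arg[OF \<beta>]) (use j False in simp)
      ultimately show ?thesis unfolding upd
        by (simp only:) (intro linear_mult_left_real)
    qed
  qed
next
  fix v :: "nat \<Rightarrow> 'a" and i j assume ij: "i < p+q \<and> j < p+q \<and> i \<noteq> j \<and> v i = v j"
  then have "v \<circ> Transposition.transpose i j = v"
    by (auto simp: fun_eq_iff Transposition.transpose_def)
  moreover have "wedge p q \<alpha> \<beta> (v \<circ> Transposition.transpose i j) = - wedge p q \<alpha> \<beta> v"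
    using wedge_permute[of "Transposition.transpose i j" p q \<alpha> \<beta> v] ij
    by (simp add: permutes_swap_id sign_swap_id)
  ultimately show "wedge p q \<alpha> \<beta> v = 0" by simp
qed

lemma wedge_wedge_list_eq_0_row:
  assumes k: "k < s" and zero: "\<And>i. i < s+q \<Longrightarrow> \<xi> k (v i) = 0"
  shows "wedge s q (wedge_list s \<xi>) \<beta> v = 0"
proof -
  have "wedge_list s \<xi> (v \<circ> \<sigma>) = 0" if "\<sigma> permutes {..<s+q}" for \<sigma>
    by (rule wedge_list_eq_0_row[OF k]) (use zero permutes_lessThan[OF that] in auto)
  then show ?thesis unfolding wedge_def by (simp add: sum.neutral)
qed

lemma wedge_one_form_lincomb:
  assumes "\<And>x. h x = a * f x + b * g x"
  shows "wedge 1 p (one_form h) \<mu> v = a * wedge 1 p (one_form f) \<mu> v + b * wedge 1 p (one_form g) \<mu> v"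
  unfolding wedge_def one_form_def assms
  by (simp add: algebra_simps sum.distrib sum_distrib_left add_divide_distrib)

lemma block_permutation_split:
  fixes \<sigma> :: "nat \<Rightarrow> nat"
  assumes \<sigma>: "\<sigma> permutes {..<s+q}" and block: "\<forall>i<s. \<sigma> i < s"
  shows "(\<lambda>x. if x < s then \<sigma> x else x) permutes {..<s}"
    and "(\<lambda>x. if x < s then x else \<sigma> x) permutes {s..<s+q}"
    and "\<sigma> = (\<lambda>x. if x < s then \<sigma> x else x) \<circ> (\<lambda>x. if x < s then x else \<sigma> x)"
proof -
  have inj: "inj \<sigma>" using permutes_inj[OF \<sigma>] .
  have low: "\<sigma> ` {..<s} = {..<s}"
    using block by (intro endo_inj_surj inj_on_subset[OF inj]) auto
  have high: "s \<le> \<sigma> x" if "s \<le> x" for x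
  proof (rule ccontr)
    assume "\<not> s \<le> \<sigma> x"
    then obtain y where "y < s" "\<sigma> y = \<sigma> x" using low by (metis imageE lessThan_iff not_le)
    then show False using injD[OF inj] that by fastforce
  qed
  show "(\<lambda>x. if x < s then \<sigma> x else x) permutes {..<s}"
  proof (rule bij_imp_permutes)
    have "bij_betw \<sigma> {..<s} {..<s}" using low inj by (auto simp: bij_betw_def intro: inj_on_subset)
    then show "bij_betw (\<lambda>x. if x < s then \<sigma> x else x) {..<s} {..<s}"
      by (rule bij_betw_cong[THEN iffD1, rotated]) auto
  qed auto
  show "(\<lambda>x. if x < s then x else \<sigma> x) permutes {s..<s+q}"
  proof (rule bij_imp_permutes)
    have "\<sigma> ` {s..<s+q} = {s..<s+q}"
      using high permutes_lessThan[OF \<sigma>] by (intro endo_inj_surj inj_on_subset[OF inj]) auto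
    then have "bij_betw \<sigma> {s..<s+q} {s..<s+q}" using inj by (auto simp: bij_betw_def intro: inj_on_subset)
    then show "bij_betw (\<lambda>x. if x < s then x else \<sigma> x) {s..<s+q} {s..<s+q}"
      by (rule bij_betw_cong[THEN iffD1, rotated]) auto
  qed (use permutes_not_in[OF \<sigma>] in auto)
  show "\<sigma> = (\<lambda>x. if x < s then \<sigma> x else x) \<circ> (\<lambda>x. if x < s then x else \<sigma> x)"
  proof (rule ext)
    fix x
    show "\<sigma> x = ((\<lambda>x. if x < s then \<sigma> x else x) \<circ> (\<lambda>x. if x < s then x else \<sigma> x)) x"
      using high[of x] by (cases "x < s") auto
  qed
qed

lemma card_block_permutations:
  "card {\<sigma>. \<sigma> permutes {..<s+q} \<and> (\<forall>i<s. \<sigma> i < s)} = fact s * fact q"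
proof -
  let ?G = "{\<sigma>. \<sigma> permutes {..<s+q} \<and> (\<forall>i<s. \<sigma> i < s)}"
  let ?P1 = "{a. a permutes {..<s}}" and ?P2 = "{b. b permutes {s..<s+q}}"
  let ?f = "\<lambda>(a, b). a \<circ> b"
  let ?g = "\<lambda>\<sigma>. ((\<lambda>x. if x < s then \<sigma> x else x), (\<lambda>x. if x < s then x else \<sigma> (x::nat)))"
  have "bij_betw ?f (?P1 \<times> ?P2) ?G"
  proof (rule bij_betw_byWitness[where f'="?g"])
    show "\<forall>ab\<in>?P1 \<times> ?P2. ?g (?f ab) = ab"
    proof
      fix ab assume "ab \<in> ?P1 \<times> ?P2"
      then obtain a b where ab: "ab = (a, b)" "a permutes {..<s}" "b permutes {s..<s+q}" by auto
      have "x < s \<Longrightarrow> b x = x" "\<not> x < s \<Longrightarrow> a x = x" for x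
        using permutes_not_in[OF ab(3), of x] permutes_not_in[OF ab(2), of x] by auto
      moreover have "\<not> x < s \<Longrightarrow> \<not> b x < s" for x
        using permutes_in_image[OF ab(3), of x] permutes_not_in[OF ab(3), of x] by (cases "x < s + q") auto
      ultimately show "?g (?f ab) = ab" using ab by (auto simp: fun_eq_iff)
    qed
    show "\<forall>\<sigma>\<in>?G. ?f (?g \<sigma>) = \<sigma>"
      using block_permutation_split(3) by auto
    show "?f ` (?P1 \<times> ?P2) \<subseteq> ?G"
    proof
      fix \<sigma> assume "\<sigma> \<in> ?f ` (?P1 \<times> ?P2)"
      then obtain a b where ab: "\<sigma> = a \<circ> b" "a permutes {..<s}" "b permutes {s..<s+q}" by auto
      have "a \<circ> b permutes {..<s+q}"
        by (rule permutes_compose; rule permutes_subset, use ab in auto)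
      moreover have "\<forall>i<s. a (b i) < s"
        using permutes_not_in[OF ab(3)] permutes_lessThan[OF ab(2)] by auto
      ultimately show "\<sigma> \<in> ?G" using ab by auto
    qed
    show "?g ` ?G \<subseteq> ?P1 \<times> ?P2"
      using block_permutation_split(1,2) by auto
  qed
  then have "card ?G = card (?P1 \<times> ?P2)" by (simp add: bij_betw_same_card)
  also have "\<dots> = fact s * fact q"
    by (simp add: card_cartesian_product card_permutations)
  finally show ?thesis .
qed

lemma shift_transpose:
  fixes s a b :: nat
  assumes "s \<le> a" "s \<le> b"
  shows "(\<lambda>j. u (Transposition.transpose a b (s + j))) = (\<lambda>j. u (s + j)) \<circ> Transposition.transpose (a - s) (b - s)"
proof -
  have "Transposition.transpose a b (s + j) = s + Transposition.transpose (a - s) (b - s) j" for j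
    using assms by (auto simp add: Transposition.transpose_def split: if_splits; arith)
  then show ?thesis by (simp add: fun_eq_iff)
qed

text \<open>Only the block permutations, which preserve \<open>{..<s}\<close>, contribute to the sum defining the
  wedge product; each contributes \<open>\<beta>(w\<^sub>s, \<dots>)\<close>, and there are \<open>s! q!\<close> of them.\<close>

lemma wedge_wedge_list_eval:
  assumes lin: "\<And>k. k < s \<Longrightarrow> linear (\<xi> k)" and \<beta>: "is_form q \<beta>"
    and dual: "\<And>k i. k < s \<Longrightarrow> i < s+q \<Longrightarrow> \<xi> k (w i) = (if i = k then 1 else 0)"
  shows "wedge s q (wedge_list s \<xi>) \<beta> w = \<beta> (\<lambda>j. w (s+j))"
proof -
  let ?P = "{\<sigma>. \<sigma> permutes {..<s+q}}"
  let ?G = "{\<sigma>. \<sigma> permutes {..<s+q} \<and> (\<forall>i<s. \<sigma> i < s)}"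
  let ?F = "\<lambda>\<sigma>. of_int (sign \<sigma>) * wedge_list s \<xi> (w \<circ> \<sigma>) * \<beta> (\<lambda>i. w (\<sigma> (s + i)))"
  define \<beta>' where "\<beta>' u = \<beta> (\<lambda>j. u (s + j))" for u
  have \<beta>'_transpose: "\<beta>' (u \<circ> Transposition.transpose a b) = - \<beta>' u"
    if "a \<in> {s..<s+q}" "b \<in> {s..<s+q}" "a \<noteq> b" for u a b
    unfolding \<beta>'_def using shift_transpose[of s a b u] form_transpose[OF \<beta>, of "a - s" "b - s"] that
    by auto
  have "?F \<sigma> = 0" if "\<sigma> \<in> ?P - ?G" for \<sigma>
  proof -
    from that obtain i where i: "i < s" "\<not> \<sigma> i < s" and \<sigma>: "\<sigma> permutes {..<s+q}" by auto
    have "wedge_list s \<xi> (w \<circ> \<sigma>) = 0"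
      by (rule wedge_list_eq_0_col[OF i(1)]) (use dual i permutes_lessThan[OF \<sigma>, of i] in auto)
    then show ?thesis by simp
  qed
  then have "sum ?F ?P = sum ?F ?G"
    by (intro sum.mono_neutral_right) (auto simp: finite_permutations)
  also have "\<dots> = (\<Sum>\<sigma>\<in>?G. \<beta>' w)"
  proof (rule sum.cong[OF refl])
    fix \<sigma> assume "\<sigma> \<in> ?G"
    then have \<sigma>: "\<sigma> permutes {..<s+q}" and block: "\<forall>i<s. \<sigma> i < s" by auto
    define \<sigma>1 \<sigma>2 where "\<sigma>1 = (\<lambda>x. if x < s then \<sigma> x else x)" and "\<sigma>2 = (\<lambda>x. if x < s then x else \<sigma> x)"
    note split = block_permutation_split[OF \<sigma> block, folded \<sigma>1_def \<sigma>2_def]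
    have "sign \<sigma> = sign \<sigma>1 * sign \<sigma>2"
      using split permutes_imp_permutation by (metis finite_atLeastLessThan finite_lessThan sign_compose)
    moreover have "wedge_list s \<xi> (w \<circ> \<sigma>) = of_int (sign \<sigma>1)"
    proof -
      have "wedge_list s \<xi> (w \<circ> \<sigma>) = wedge_list s \<xi> (w \<circ> \<sigma>1)"
        by (rule form_cong[OF is_form_wedge_list[OF lin]]) (auto simp: \<sigma>1_def)
      also have "\<dots> = of_int (sign \<sigma>1) * wedge_list s \<xi> w"
        by (rule wedge_list_permute[OF split(1)])
      also have "wedge_list s \<xi> w = 1"
        by (rule wedge_list_dual) (use dual in auto)
      finally show ?thesis by (simp add: o_def)
    qed
    moreover have "\<beta> (\<lambda>i. w (\<sigma> (s + i))) = of_int (sign \<sigma>2) * \<beta>' w"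
    proof -
      have "\<beta> (\<lambda>i. w (\<sigma> (s + i))) = \<beta>' (w \<circ> \<sigma>2)" unfolding \<beta>'_def by (simp add: \<sigma>2_def)
      also have "\<dots> = of_int (sign \<sigma>2) * \<beta>' w"
        by (rule sign_permute_if_transpose_neg[where A = "{s..<s+q}" and g = \<beta>', OF _ split(2) \<beta>'_transpose])
          simp
      finally show ?thesis .
    qed
    ultimately show "?F \<sigma> = \<beta>' w" by (simp add: algebra_simps)
  qed
  also have "\<dots> = (fact s * fact q) * \<beta>' w" by (simp add: card_block_permutations)
  finally show ?thesis unfolding wedge_def \<beta>'_def by simp
qed

lemma wedge_one_form_eval:
  assumes "linear \<eta>" "is_form q \<beta>" "\<eta> y = 1" "\<And>i. i < q \<Longrightarrow> \<eta> (d i) = 0"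
  shows "wedge 1 q (one_form \<eta>) \<beta> (\<lambda>i. if i = 0 then y else d (i - 1)) = \<beta> d"
  using wedge_wedge_list_eval[of 1 "\<lambda>_. \<eta>" q \<beta> "\<lambda>i. if i = 0 then y else d (i - 1)"] assms
  by (simp add: one_form_eq_wedge_list)

lemma wedge_zero_right:
  assumes \<alpha>: "is_form p \<alpha>"
  shows "wedge p 0 \<alpha> (\<lambda>_. c) = (\<lambda>v. c * \<alpha> v)"
proof
  fix v
  have "(\<Sum>\<sigma> | \<sigma> permutes {..<p}. of_int (sign \<sigma>) * \<alpha> (v \<circ> \<sigma>) * c) = (\<Sum>\<sigma> | \<sigma> permutes {..<p}. c * \<alpha> v)"
    using form_permute[OF \<alpha>] by (intro sum.cong) (auto simp: algebra_simps)
  then show "wedge p 0 \<alpha> (\<lambda>_. c) v = c * \<alpha> v"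
    unfolding wedge_def by (simp add: card_permutations)
qed

section \<open>Forms determined on a frame\<close>

lemma forms_eq_on_span:
  assumes g: "is_form p g" and h: "is_form p h"
    and eq: "\<And>v. (\<forall>i<p. v i \<in> B) \<Longrightarrow> g v = h v"
    and v: "\<forall>i<p. v i \<in> span B"
  shows "g v = h v"
proof -
  have "\<forall>v. (\<forall>i<p. v i \<in> span B) \<and> (\<forall>i. k \<le> i \<and> i < p \<longrightarrow> v i \<in> B) \<longrightarrow> g v = h v"
    if "k \<le> p" for k
    using that
  proof (induction k)
    case 0
    then show ?case using eq by auto
  next
    case (Suc k)
    show ?case
    proof (intro allI impI)
      fix v assume v: "(\<forall>i<p. v i \<in> span B) \<and> (\<forall>i. Suc k \<le> i \<and> i < p \<longrightarrow> v i \<in> B)"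
      have k: "k < p" using Suc.prems by simp
      have "g (v(k := v k)) = h (v(k := v k))"
      proof (rule linear_eq_on_span[OF form_linear_arg[OF g k] form_linear_arg[OF h k]])
        fix b assume b: "b \<in> B"
        have "\<forall>i<p. (v(k := b)) i \<in> span B" using v span_base[OF b] by auto
        moreover have "\<forall>i. k \<le> i \<and> i < p \<longrightarrow> (v(k := b)) i \<in> B"
        proof (intro allI impI)
          fix i assume "k \<le> i \<and> i < p"
          then show "(v(k := b)) i \<in> B" using v b by (cases "i = k") auto
        qed
        ultimately show "g (v(k := b)) = h (v(k := b))"
          using Suc.IH Suc.prems by simp
      qed (use v k in simp)
      then show "g v = h v" by simp
    qed
  qed
  from this[OF le_refl] v show ?thesis by auto
qed

text \<open>Sorting argument: a transposition of arguments changes both sides by the same sign and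
  reduces the number of positions \<open>i < s\<close> with \<open>v i \<noteq> e i\<close>.\<close>

lemma forms_eq_on_frame:
  fixes e :: "nat \<Rightarrow> 'v::real_vector"
  assumes g: "is_form p g" and h: "is_form p h" and sp: "s \<le> p" and inj: "inj_on e {..<s}"
    and missing: "\<And>v k. (\<forall>i<p. v i \<in> e ` {..<s} \<union> D) \<Longrightarrow> k < s \<Longrightarrow> (\<forall>i<p. v i \<noteq> e k) \<Longrightarrow> g v = h v"
    and frame: "\<And>v. (\<forall>i<s. v i = e i) \<Longrightarrow> (\<forall>i. s \<le> i \<and> i < p \<longrightarrow> v i \<in> D) \<Longrightarrow> g v = h v"
    and v: "\<forall>i<p. v i \<in> span (e ` {..<s} \<union> D)"
  shows "g v = h v"
proof (rule forms_eq_on_span[OF g h _ v])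
  let ?B = "e ` {..<s} \<union> D"
  let ?wrong = "\<lambda>v. {i. i < s \<and> v i \<noteq> e i}"
  have "\<forall>v. card (?wrong v) = m \<longrightarrow> (\<forall>i<p. v i \<in> ?B) \<longrightarrow> g v = h v" for m
  proof (induction m rule: less_induct)
    case (less m)
    show ?case
    proof (intro allI impI)
      fix v assume m: "card (?wrong v) = m" and vB: "\<forall>i<p. v i \<in> ?B"
      show "g v = h v"
      proof (cases "\<exists>i<s. v i \<noteq> e i")
        case False
        show ?thesis
        proof (cases "\<exists>i. s \<le> i \<and> i < p \<and> v i \<notin> D")
          case True
          then obtain i k where i: "s \<le> i" "i < p" and k: "k < s" "v i = e k" using vB by blast
          then have "v i = v k" "k < p" "i \<noteq> k" using False sp by auto
          then show ?thesis
            using form_alternating[OF g i(2)] form_alternating[OF h i(2)] by metis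
        qed (use frame False in auto)
      next
        case True
        then obtain i where i: "i < s" "v i \<noteq> e i" by auto
        show ?thesis
        proof (cases "\<exists>j<p. v j = e i")
          case False
          then show ?thesis using missing[OF vB i(1)] by auto
        next
          case True
          then obtain j where j: "j < p" "v j = e i" by auto
          have ij: "i \<noteq> j" "i < p" using i j sp by auto
          define v' where "v' = v \<circ> Transposition.transpose i j"
          have v'B: "\<forall>l<p. v' l \<in> ?B"
            using vB ij j(1) by (auto simp: v'_def Transposition.transpose_def)
          have "?wrong v' \<subseteq> ?wrong v - {i}"
          proof
            fix l assume l: "l \<in> ?wrong v'"
            have "e i \<noteq> e l" if "l \<noteq> i" using inj_onD[OF inj] l that i(1) by auto
            then show "l \<in> ?wrong v - {i}"
              using l j by (auto simp: v'_def Transposition.transpose_def split: if_splits)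
          qed
          then have "card (?wrong v') \<le> card (?wrong v - {i})" by (intro card_mono) auto
          also have "\<dots> < m" using m i card_Diff1_less[of "?wrong v" i] by auto
          finally have "card (?wrong v') < m" .
          then have "g v' = h v'" using less.IH v'B by blast
          moreover have "g v' = - g v" "h v' = - h v"
            unfolding v'_def using form_transpose[OF g ij(2) j(1) ij(1)] form_transpose[OF h ij(2) j(1) ij(1)]
            by auto
          ultimately show ?thesis by simp
        qed
      qed
    qed
  qed
  then show "\<And>v. \<forall>i<p. v i \<in> ?B \<Longrightarrow> g v = h v" by blast
qed

definition append_args :: "nat \<Rightarrow> (nat \<Rightarrow> 'v) \<Rightarrow> (nat \<Rightarrow> 'v) \<Rightarrow> nat \<Rightarrow> 'v" where
  "append_args s e d = (\<lambda>i. if i < s then e i else d (i - s))"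

lemma is_form_append_args:
  assumes \<mu>: "is_form p \<mu>" and "s \<le> p"
  shows "is_form (p - s) (\<lambda>d. \<mu> (append_args s e d))"
  unfolding is_form_def
proof (intro conjI allI impI)
  fix v w :: "nat \<Rightarrow> 'a" assume "\<forall>i<p - s. v i = w i"
  then show "\<mu> (append_args s e v) = \<mu> (append_args s e w)"
    by (intro form_cong[OF \<mu>]) (auto simp: append_args_def)
next
  fix i v assume i: "i < p - s"
  have "append_args s e (v(i := x)) = (append_args s e v)(s + i := x)" for x
    by (auto simp: append_args_def fun_eq_iff)
  then show "linear (\<lambda>x. \<mu> (append_args s e (v(i := x))))"
    using form_linear_arg[OF \<mu>, of "s + i" "append_args s e v"] i by simp
next
  fix v :: "nat \<Rightarrow> 'a" and i j assume "i < p - s \<and> j < p - s \<and> i \<noteq> j \<and> v i = v j"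
  then show "\<mu> (append_args s e v) = 0"
    by (intro form_alternating[OF \<mu>, of "s + i" "s + j"]) (auto simp: append_args_def)
qed

lemma is_form_append_args_left:
  assumes \<mu>: "is_form p \<mu>" and sp: "s \<le> p"
  shows "is_form s (\<lambda>x. \<mu> (append_args s x d))"
  unfolding is_form_def
proof (intro conjI allI impI)
  fix v w :: "nat \<Rightarrow> 'a" assume "\<forall>i<s. v i = w i"
  then show "\<mu> (append_args s v d) = \<mu> (append_args s w d)"
    by (intro form_cong[OF \<mu>]) (auto simp: append_args_def)
next
  fix i v assume i: "i < s"
  have "append_args s (v(i := x)) d = (append_args s v d)(i := x)" for x
    using i by (auto simp: append_args_def fun_eq_iff)
  then show "linear (\<lambda>x. \<mu> (append_args s (v(i := x)) d))"
    using form_linear_arg[OF \<mu>, of i "append_args s v d"] i sp by simp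
next
  fix v :: "nat \<Rightarrow> 'a" and i j assume "i < s \<and> j < s \<and> i \<noteq> j \<and> v i = v j"
  then show "\<mu> (append_args s v d) = 0"
    using sp by (intro form_alternating[OF \<mu>, of i j]) (auto simp: append_args_def)
qed

lemma frame_decomposition:
  fixes \<xi> :: "nat \<Rightarrow> 'v::real_vector \<Rightarrow> real"
  assumes lin: "\<And>k. k < s \<Longrightarrow> linear (\<xi> k)"
    and dual: "\<And>k j. k < s \<Longrightarrow> j < s \<Longrightarrow> \<xi> k (e j) = (if k = j then 1 else 0)"
  shows "x - (\<Sum>j<s. \<xi> j x *\<^sub>R e j) \<in> {x. \<forall>k<s. \<xi> k x = 0}"
    and "x \<in> span (e ` {..<s} \<union> {x. \<forall>k<s. \<xi> k x = 0})"
proof -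
  have "\<xi> k (\<Sum>j<s. \<xi> j x *\<^sub>R e j) = \<xi> k x" if k: "k < s" for k
  proof -
    have "\<xi> k (\<Sum>j<s. \<xi> j x *\<^sub>R e j) = (\<Sum>j<s. \<xi> j x * \<xi> k (e j))"
      using lin[OF k] by (simp add: linear_sum linear_scale)
    also have "\<dots> = (\<Sum>j<s. if j = k then \<xi> j x else 0)" using dual k by (intro sum.cong) auto
    also have "\<dots> = \<xi> k x" using k by simp
    finally show ?thesis .
  qed
  then show kernel: "x - (\<Sum>j<s. \<xi> j x *\<^sub>R e j) \<in> {x. \<forall>k<s. \<xi> k x = 0}"
    using lin by (simp add: linear_diff)
  have "(\<Sum>j<s. \<xi> j x *\<^sub>R e j) \<in> span (e ` {..<s} \<union> {x. \<forall>k<s. \<xi> k x = 0})"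
    by (intro span_sum span_mul span_base) auto
  moreover have "x - (\<Sum>j<s. \<xi> j x *\<^sub>R e j) \<in> span (e ` {..<s} \<union> {x. \<forall>k<s. \<xi> k x = 0})"
    using kernel by (intro span_base) auto
  ultimately have "(\<Sum>j<s. \<xi> j x *\<^sub>R e j) + (x - (\<Sum>j<s. \<xi> j x *\<^sub>R e j))
      \<in> span (e ` {..<s} \<union> {x. \<forall>k<s. \<xi> k x = 0})"
    by (rule span_add)
  then show "x \<in> span (e ` {..<s} \<union> {x. \<forall>k<s. \<xi> k x = 0})" by simp
qed

lemma forms_eq_if_eq_on_frame:
  fixes \<xi> :: "nat \<Rightarrow> 'v::real_vector \<Rightarrow> real"
  assumes lin: "\<And>k. k < s \<Longrightarrow> linear (\<xi> k)"
    and dual: "\<And>k j. k < s \<Longrightarrow> j < s \<Longrightarrow> \<xi> k (e j) = (if k = j then 1 else 0)"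
    and g: "is_form q g" and h: "is_form q h" and sq: "s \<le> q"
    and vanish: "\<And>v k. k < s \<Longrightarrow> (\<forall>i<q. \<xi> k (v i) = 0) \<Longrightarrow> g v = h v"
    and frame: "\<And>d. (\<forall>i<q - s. \<forall>k<s. \<xi> k (d i) = 0) \<Longrightarrow> g (append_args s e d) = h (append_args s e d)"
  shows "g = h"
proof
  fix v
  let ?D = "{x. \<forall>k<s. \<xi> k x = 0}"
  have inj: "inj_on e {..<s}"
  proof (rule inj_onI)
    fix i j assume "i \<in> {..<s}" "j \<in> {..<s}" "e i = e j"
    then show "i = j" using dual[of i i] dual[of i j] by (auto split: if_splits)
  qed
  show "g v = h v"
  proof (rule forms_eq_on_frame[OF g h sq inj, of ?D])
    fix v k assume vB: "\<forall>i<q. v i \<in> e ` {..<s} \<union> ?D" and k: "k < s" and nm: "\<forall>i<q. v i \<noteq> e k"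
    have "\<xi> k (v i) = 0" if i: "i < q" for i
    proof (cases "v i \<in> ?D")
      case False
      then obtain j where "j < s" "v i = e j" using vB i by auto
      then show ?thesis using dual[of k j] nm i k by auto
    qed (use k in simp)
    then show "g v = h v" by (intro vanish[OF k]) simp
  next
    fix v assume "\<forall>i<s. v i = e i" "\<forall>i. s \<le> i \<and> i < q \<longrightarrow> v i \<in> ?D"
    then have v: "append_args s e (\<lambda>i. v (s + i)) = v" "\<forall>i<q - s. \<forall>k<s. \<xi> k (v (s + i)) = 0"
      by (auto simp: append_args_def fun_eq_iff)
    from frame[OF v(2)] show "g v = h v" unfolding v(1) .
  qed (use frame_decomposition(2)[OF lin dual] in auto)
qed

section \<open>Divisibility by a 1-form\<close>

lemma form_vanishes_if_wedge_one_form_eq_0: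
  assumes \<eta>: "linear \<eta>" and \<beta>: "is_form q \<beta>" and y: "\<eta> y = 1" "y \<in> U"
    and wedge: "\<And>v. (\<forall>i<q+1. v i \<in> U) \<Longrightarrow> wedge 1 q (one_form \<eta>) \<beta> v = 0"
    and d: "\<And>i. i < q \<Longrightarrow> d i \<in> U \<and> \<eta> (d i) = 0"
  shows "\<beta> d = 0"
proof -
  have "\<beta> d = wedge 1 q (one_form \<eta>) \<beta> (\<lambda>i. if i = 0 then y else d (i - 1))"
    by (rule wedge_one_form_eval[OF \<eta> \<beta> y(1), symmetric]) (use d in auto)
  also have "\<dots> = 0" by (rule wedge) (use d y in auto)
  finally show ?thesis .
qed

lemma wedge_one_form_eq_0_iff:
  assumes \<eta>: "linear \<eta>" and \<mu>: "is_form p \<mu>" and y: "\<eta> y = 1"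
  shows "wedge 1 p (one_form \<eta>) \<mu> = (\<lambda>v. 0) \<longleftrightarrow> (\<forall>v. (\<forall>i<p. \<eta> (v i) = 0) \<longrightarrow> \<mu> v = 0)"
proof
  assume "wedge 1 p (one_form \<eta>) \<mu> = (\<lambda>v. 0)"
  then show "\<forall>v. (\<forall>i<p. \<eta> (v i) = 0) \<longrightarrow> \<mu> v = 0"
    using form_vanishes_if_wedge_one_form_eq_0[OF \<eta> \<mu> y, of UNIV] by auto
next
  assume vanish: "\<forall>v. (\<forall>i<p. \<eta> (v i) = 0) \<longrightarrow> \<mu> v = 0"
  show "wedge 1 p (one_form \<eta>) \<mu> = (\<lambda>v. 0)"
  proof (rule forms_eq_if_eq_on_frame[of 1 "\<lambda>_. \<eta>" "\<lambda>_. y"])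
    show "is_form (1 + p) (wedge 1 p (one_form \<eta>) \<mu>)"
      by (rule is_form_wedge[OF is_form_one_form[OF \<eta>] \<mu>])
  next
    fix v k assume "k < 1" "\<forall>i<1 + p. \<eta> (v i) = 0"
    then show "wedge 1 p (one_form \<eta>) \<mu> v = 0"
      unfolding one_form_eq_wedge_list by (intro wedge_wedge_list_eq_0_row[of 0]) auto
  next
    fix d assume "\<forall>i<1 + p - 1. \<forall>k<1::nat. \<eta> (d i) = 0"
    then have d: "\<And>i. i < p \<Longrightarrow> \<eta> (d i) = 0" by auto
    have "append_args 1 (\<lambda>_. y) d = (\<lambda>i. if i = 0 then y else d (i - 1))"
      by (auto simp: append_args_def fun_eq_iff)
    then have "wedge 1 p (one_form \<eta>) \<mu> (append_args 1 (\<lambda>_. y) d) = \<mu> d"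
      using wedge_one_form_eval[OF \<eta> \<mu> y, of d] d by simp
    with vanish d show "wedge 1 p (one_form \<eta>) \<mu> (append_args 1 (\<lambda>_. y) d) = 0" by simp
  qed (use \<eta> y in \<open>auto simp: is_form_zero\<close>)
qed
lemma indivisible_in_UNIV_if_indivisible_in:
  assumes \<zeta>: "is_form q \<zeta>" and indiv: "indivisible_in U q \<zeta>"
    and d: "\<forall>i<q. d i \<in> U" "\<zeta> d \<noteq> 0"
  shows "indivisible_in UNIV q \<zeta>"
proof -
  have "x \<in> div_space UNIV q \<zeta>" for x
    unfolding div_space_def
  proof (intro CollectI conjI UNIV_I allI impI)
    fix \<eta> :: "'a \<Rightarrow> real"
    assume "linear \<eta> \<and> (\<forall>v. (\<forall>i<q + 1. v i \<in> UNIV) \<longrightarrow> wedge 1 q (one_form \<eta>) \<zeta> v = 0)"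
    then have \<eta>: "linear \<eta>" and wedge: "\<And>v. wedge 1 q (one_form \<eta>) \<zeta> v = 0" by auto
    have "\<eta> u = 0" if "u \<in> U" for u
    proof -
      have "u \<in> div_space U q \<zeta>" using indiv that unfolding indivisible_in_def by simp
      then show ?thesis using \<eta> wedge unfolding div_space_def by blast
    qed
    show "\<eta> x = 0"
    proof (rule ccontr)
      assume "\<eta> x \<noteq> 0"
      then have "\<eta> ((1 / \<eta> x) *\<^sub>R x) = 1" using \<eta> by (simp add: linear_scale)
      then have "\<zeta> d = 0"
        by (rule form_vanishes_if_wedge_one_form_eq_0[OF \<eta> \<zeta> _ UNIV_I])
          (use wedge \<open>\<And>u. u \<in> U \<Longrightarrow> \<eta> u = 0\<close> d(1) in auto)
      with d(2) show False ..
    qed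
  qed
  then show ?thesis unfolding indivisible_in_def by blast
qed

section \<open>Dual bases in Euclidean space\<close>

lemma linear_functional_eq_inner:
  fixes \<eta> :: "'v::euclidean_space \<Rightarrow> real"
  assumes "linear \<eta>"
  shows "\<eta> = (\<lambda>x. adjoint \<eta> 1 \<bullet> x)"
  using adjoint_works[OF assms, of _ 1] by (simp add: fun_eq_iff inner_commute)

lemma dual_vectors_exist:
  fixes \<xi> :: "nat \<Rightarrow> 'v::euclidean_space \<Rightarrow> real"
  assumes lin: "\<And>k. k < s \<Longrightarrow> linear (\<xi> k)" and indep: "fun_lin_indep s \<xi>" and s: "s \<le> DIM('v)"
  shows "\<exists>e. \<forall>k<s. \<forall>j<s. \<xi> k (e j) = (if k = j then 1 else 0)"
proof -
  obtain u where u: "bij_betw u {..<DIM('v)} (Basis :: 'v set)"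
    using ex_bij_betw_nat_finite[OF finite_Basis] by (metis atLeast0LessThan)
  have u_orth: "u j \<bullet> u k = (if j = k then 1 else 0)" if "j < s" "k < s" for j k
  proof -
    have "u j \<in> Basis" "u k \<in> Basis" "u j = u k \<longleftrightarrow> j = k"
      using u s that by (auto simp: bij_betw_def inj_on_def)
    then show ?thesis by (simp add: inner_Basis)
  qed
  define L where "L x = (\<Sum>i<s. \<xi> i x *\<^sub>R u i)" for x
  have "linear (\<lambda>x. \<xi> i x *\<^sub>R u i)" if "i < s" for i
    using linear_add[OF lin[OF that]] linear_scale[OF lin[OF that]] by (simp add: linear_iff scaleR_add_left)
  then have "linear L"
    unfolding L_def by (intro linear_compose_sum) auto
  have L_inner: "L x \<bullet> u k = \<xi> k x" if k: "k < s" for x k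
  proof -
    have "L x \<bullet> u k = (\<Sum>i<s. \<xi> i x * (u i \<bullet> u k))" unfolding L_def by (simp add: inner_sum_left)
    also have "\<dots> = (\<Sum>i<s. if i = k then \<xi> i x else 0)" using u_orth k by (intro sum.cong) auto
    finally show ?thesis using k by simp
  qed
  let ?T = "u ` {..<s}"
  have u_in_range: "u j \<in> range L" if j: "j < s" for j
  proof (rule ccontr)
    assume "u j \<notin> range L"
    have range_L: "span (range L) = range L"
      using linear_subspace_image[OF \<open>linear L\<close> subspace_UNIV] by (simp add: span_eq_iff)
    have "L x \<in> span ?T" for x unfolding L_def by (intro span_sum span_mul span_base) auto
    then have "range L \<subseteq> span ?T" by auto
    then have "span (range L) \<subseteq> span ?T" by (simp add: span_minimal)
    moreover have "u j \<notin> span (range L)"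
      unfolding range_L by fact
    moreover have "u j \<in> span ?T" using j by (auto intro: span_base)
    ultimately have "span (range L) \<subset> span ?T" by auto
    then obtain z where z: "z \<noteq> 0" "z \<in> span ?T" "\<And>y. y \<in> span (range L) \<Longrightarrow> orthogonal z y"
      using orthogonal_to_subspace_exists_gen by blast
    have "(\<Sum>i<s. (z \<bullet> u i) * \<xi> i x) = 0" for x
      using z(3)[of "L x"] unfolding orthogonal_def L_def
      by (simp add: span_base inner_sum_right mult.commute)
    then have "\<forall>i<s. z \<bullet> u i = 0"
      using indep[unfolded fun_lin_indep_def, THEN spec[of _ "\<lambda>i. z \<bullet> u i"]] by blast
    then have "span ?T \<subseteq> {w. z \<bullet> w = 0}"
      by (intro span_minimal) (auto simp: subspace_hyperplane)
    then show False using z(1,2) by auto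
  qed
  define e where "e j = (SOME x. L x = u j)" for j
  have L_e: "L (e j) = u j" if "j < s" for j
  proof -
    have "\<exists>x. L x = u j" using u_in_range[OF that] by auto
    then show ?thesis unfolding e_def by (rule someI_ex)
  qed
  show ?thesis
  proof (intro exI allI impI)
    fix k j assume k: "k < s" and j: "j < s"
    have "\<xi> k (e j) = L (e j) \<bullet> u k" using L_inner[OF k] by simp
    also have "\<dots> = (if k = j then 1 else 0)" using L_e[OF j] u_orth[OF j k] by auto
    finally show "\<xi> k (e j) = (if k = j then 1 else 0)" .
  qed
qed

lemma div_space_UNIV_eq: "div_space UNIV p \<mu> = {x. \<forall>\<eta>\<in>div_polar p \<mu>. \<eta> x = 0}"
  unfolding div_space_def div_polar_def by (auto simp: fun_eq_iff)

lemma fun_basis_of_div_polar: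
  assumes "fun_basis_of s \<xi> (div_polar p \<mu>)" and "k < s"
  shows "linear (\<xi> k)" and "wedge 1 p (one_form (\<xi> k)) \<mu> = (\<lambda>v. 0)"
  using assms unfolding fun_basis_of_def div_polar_def by blast+

lemma div_space_eq_common_kernel:
  assumes basis: "fun_basis_of s \<xi> (div_polar p \<mu>)"
  shows "div_space UNIV p \<mu> = {x. \<forall>k<s. \<xi> k x = 0}"
  unfolding div_space_UNIV_eq
proof (intro set_eqI iffI)
  fix x assume "x \<in> {x. \<forall>\<eta>\<in>div_polar p \<mu>. \<eta> x = 0}"
  then show "x \<in> {x. \<forall>k<s. \<xi> k x = 0}" using basis unfolding fun_basis_of_def by blast
next
  fix x assume x: "x \<in> {x. \<forall>k<s. \<xi> k x = 0}"
  show "x \<in> {x. \<forall>\<eta>\<in>div_polar p \<mu>. \<eta> x = 0}"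
  proof (intro CollectI ballI)
    fix \<eta> assume "\<eta> \<in> div_polar p \<mu>"
    then obtain c where "\<forall>x. \<eta> x = (\<Sum>i<s. c i * \<xi> i x)"
      using basis unfolding fun_basis_of_def by blast
    then show "\<eta> x = 0" using x by simp
  qed
qed

lemma subspace_div_polar_vectors:
  "subspace {a::'v::euclidean_space. (\<lambda>x. a \<bullet> x) \<in> div_polar p \<mu>}" (is "subspace ?A")
proof -
  have linear_inner: "linear (\<lambda>x. a \<bullet> x)" for a :: 'v
    by (rule bounded_linear.linear[OF bounded_linear_inner_right])
  have in_A: "a \<in> ?A \<longleftrightarrow> (\<forall>v. wedge 1 p (one_form (\<lambda>x. a \<bullet> x)) \<mu> v = 0)" for a
    unfolding div_polar_def using linear_inner by (auto simp: fun_eq_iff)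
  show ?thesis
    unfolding subspace_def
  proof (intro conjI ballI allI)
    have zero: "(\<bullet>) (0::'v) = (\<lambda>x. 0)" by (simp add: fun_eq_iff)
    show "0 \<in> ?A"
      unfolding in_A zero using wedge_one_form_lincomb[of "\<lambda>x. 0" 0 "\<lambda>x. 0" 0 "\<lambda>x. 0" p \<mu>] by simp
  next
    fix a b assume "a \<in> ?A" "b \<in> ?A"
    then show "a + b \<in> ?A"
      unfolding in_A
      using wedge_one_form_lincomb[of "(\<bullet>) (a + b)" 1 "(\<bullet>) a" 1 "(\<bullet>) b" p \<mu>]
      by (simp add: inner_add_left)
  next
    fix c a assume "a \<in> ?A"
    then show "c *\<^sub>R a \<in> ?A"
      unfolding in_A
      using wedge_one_form_lincomb[of "(\<bullet>) (c *\<^sub>R a)" c "(\<bullet>) a" 0 "(\<bullet>) a" p \<mu>]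
      by simp
  qed
qed

lemma div_polar_eq_inner:
  fixes \<eta> :: "'v::euclidean_space \<Rightarrow> real"
  assumes "\<eta> \<in> div_polar p \<mu>"
  shows "(\<lambda>x. adjoint \<eta> 1 \<bullet> x) \<in> div_polar p \<mu>" and "\<eta> = (\<lambda>x. adjoint \<eta> 1 \<bullet> x)"
  using assms linear_functional_eq_inner[of \<eta>] unfolding div_polar_def by auto

lemma div_space_eq_orthogonal:
  fixes \<mu> :: "(nat \<Rightarrow> 'v::euclidean_space) \<Rightarrow> real"
  shows "div_space UNIV p \<mu> = {y. \<forall>a\<in>{a. (\<lambda>x. a \<bullet> x) \<in> div_polar p \<mu>}. orthogonal a y}"
  unfolding div_space_UNIV_eq
proof (intro set_eqI iffI; simp)
  fix y assume "\<forall>\<eta>\<in>div_polar p \<mu>. \<eta> y = 0"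
  then show "\<forall>a. (\<lambda>x. a \<bullet> x) \<in> div_polar p \<mu> \<longrightarrow> orthogonal a y" unfolding orthogonal_def by auto
next
  fix y assume y: "\<forall>a. (\<lambda>x. a \<bullet> x) \<in> div_polar p \<mu> \<longrightarrow> orthogonal a y"
  show "\<forall>\<eta>\<in>div_polar p \<mu>. \<eta> y = 0"
  proof
    fix \<eta> assume \<eta>: "\<eta> \<in> div_polar p \<mu>"
    have "\<eta> y = adjoint \<eta> 1 \<bullet> y" by (subst div_polar_eq_inner(2)[OF \<eta>]) simp
    then show "\<eta> y = 0" using y div_polar_eq_inner(1)[OF \<eta>] unfolding orthogonal_def by simp
  qed
qed

lemma fun_basis_of_inner_enumeration:
  fixes B :: "'v::euclidean_space set"
  assumes B: "independent B" and u: "bij_betw u {..<card B} B"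
    and member: "\<And>b. b \<in> B \<Longrightarrow> (\<lambda>x. b \<bullet> x) \<in> S"
    and spanned: "\<And>\<eta>. \<eta> \<in> S \<Longrightarrow> \<exists>a\<in>span B. \<eta> = (\<lambda>x. a \<bullet> x)"
  shows "fun_basis_of (card B) (\<lambda>i x. u i \<bullet> x) S"
proof -
  have "finite B" using B by (rule independent_imp_finite)
  have u_inv: "inv_into {..<card B} u (u j) = j" if "j < card B" for j
    using u that by (simp add: bij_betw_def inv_into_f_f)
  show ?thesis
    unfolding fun_basis_of_def
  proof (intro conjI allI impI ballI)
    fix i assume "i < card B"
    then show "(\<lambda>x. u i \<bullet> x) \<in> S" using u member by (auto simp: bij_betw_def)
  next
    show "fun_lin_indep (card B) (\<lambda>i x. u i \<bullet> x)"
      unfolding fun_lin_indep_def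
    proof (intro allI impI)
      fix c i assume c: "\<forall>x. (\<Sum>i<card B. c i * (u i \<bullet> x)) = 0" and i: "i < card B"
      define f where "f b = c (inv_into {..<card B} u b)" for b
      have "(\<Sum>b\<in>B. f b *\<^sub>R b) = (\<Sum>j<card B. f (u j) *\<^sub>R u j)"
        by (rule sum.reindex_bij_betw[OF u, symmetric])
      also have "\<dots> = (\<Sum>j<card B. c j *\<^sub>R u j)"
        unfolding f_def using u_inv by (intro sum.cong) auto
      also have "\<dots> = 0"
      proof -
        have "(\<Sum>j<card B. c j *\<^sub>R u j) \<bullet> x = 0" for x
          using c by (simp add: inner_sum_left)
        then show ?thesis using inner_eq_zero_iff by blast
      qed
      finally have "\<forall>b\<in>B. f b = 0" using B \<open>finite B\<close> dependent_finite by blast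
      moreover have "u i \<in> B" using u i by (auto simp: bij_betw_def)
      ultimately show "c i = 0" using u_inv[OF i] unfolding f_def by force
    qed
  next
    fix \<eta> assume "\<eta> \<in> S"
    then obtain a where "a \<in> span B" and \<eta>: "\<eta> = (\<lambda>x. a \<bullet> x)" using spanned by blast
    then obtain f where a: "a = (\<Sum>b\<in>B. f b *\<^sub>R b)"
      using span_finite[OF \<open>finite B\<close>] by auto
    have "\<eta> x = (\<Sum>i<card B. f (u i) * (u i \<bullet> x))" for x
    proof -
      have "\<eta> x = (\<Sum>b\<in>B. f b * (b \<bullet> x))" unfolding \<eta> a by (simp add: inner_sum_left)
      also have "\<dots> = (\<Sum>i<card B. f (u i) * (u i \<bullet> x))"
        by (rule sum.reindex_bij_betw[OF u, symmetric])
      finally show ?thesis .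
    qed
    then show "\<exists>c. \<forall>x. \<eta> x = (\<Sum>i<card B. c i * (u i \<bullet> x))"
      by (intro exI[of _ "\<lambda>i. f (u i)"]) simp
  qed
qed

text \<open>Identifying 1-forms with vectors via the inner product, \<open>D'\<close> becomes a subspace \<open>A\<close> with
  \<open>D = A\<^sup>\<bottom>\<close>, so that \<open>dim D' = n - dim D\<close>.\<close>

lemma div_polar_basis_exists:
  fixes \<mu> :: "(nat \<Rightarrow> 'v::euclidean_space) \<Rightarrow> real"
  shows "\<exists>\<xi>. fun_basis_of (DIM('v) - dim (div_space UNIV p \<mu>)) \<xi> (div_polar p \<mu>)"
proof -
  define A where "A = {a::'v. (\<lambda>x. a \<bullet> x) \<in> div_polar p \<mu>}"
  have "subspace A" unfolding A_def by (rule subspace_div_polar_vectors)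
  then have dim_A: "DIM('v) - dim (div_space UNIV p \<mu>) = dim A"
    using dim_subspace_orthogonal_to_vectors[OF _ subspace_UNIV subset_UNIV, of A]
    unfolding div_space_eq_orthogonal A_def[symmetric] by simp
  obtain B where B: "B \<subseteq> A" "independent B" "A \<subseteq> span B" "card B = dim A"
    using basis_exists[of A] by blast
  obtain u where u: "bij_betw u {..<card B} B"
    using ex_bij_betw_nat_finite[OF independent_imp_finite[OF B(2)]] by (metis atLeast0LessThan)
  have "fun_basis_of (card B) (\<lambda>i x. u i \<bullet> x) (div_polar p \<mu>)"
  proof (rule fun_basis_of_inner_enumeration[OF B(2) u])
    show "(\<lambda>x. b \<bullet> x) \<in> div_polar p \<mu>" if "b \<in> B" for b using B(1) that unfolding A_def by auto
    show "\<exists>a\<in>span B. \<eta> = (\<lambda>x. a \<bullet> x)" if "\<eta> \<in> div_polar p \<mu>" for \<eta>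
      using div_polar_eq_inner[OF that] B(3) unfolding A_def by blast
  qed
  then show ?thesis unfolding dim_A B(4) by blast
qed

lemma sum_wedge_lists_dual_eval:
  fixes \<xi> :: "nat \<Rightarrow> 'v::real_vector \<Rightarrow> real"
  assumes fin: "finite I" and dual: "\<And>k j. k \<in> I \<Longrightarrow> j \<in> I \<Longrightarrow> \<xi> k (e j) = (if k = j then 1 else 0)"
    and \<beta>: "is_form q \<beta>" and g: "\<And>i. i < q \<Longrightarrow> g i \<in> I"
  shows "(\<Sum>f\<in>PiE {..<q} (\<lambda>_. I). \<beta> (e \<circ> f) / fact q * wedge_list q (\<lambda>k. \<xi> (f k)) (e \<circ> g)) = \<beta> (e \<circ> g)"
proof -
  let ?F = "PiE {..<q} (\<lambda>_. I)" and ?P = "{\<tau>. \<tau> permutes {..<q}}"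
  let ?hit = "\<lambda>f \<tau>. if \<forall>k\<in>{..<q}. f k = g (\<tau> k) then 1 else (0::real)"
  have finF: "finite ?F" using fin by (intro finite_PiE) auto
  have wedge_list_eq: "wedge_list q (\<lambda>k. \<xi> (f k)) (e \<circ> g) = (\<Sum>\<tau>\<in>?P. of_int (sign \<tau>) * ?hit f \<tau>)"
    if f: "f \<in> ?F" for f
    unfolding wedge_list_def
  proof (intro sum.cong refl arg_cong2[where f="(*)"])
    fix \<tau> assume "\<tau> \<in> ?P"
    then have "f k \<in> I" "g (\<tau> k) \<in> I" if "k < q" for k
      using f g permutes_lessThan that by (auto simp: PiE_iff)
    then have "(\<Prod>k<q. \<xi> (f k) ((e \<circ> g) (\<tau> k))) = (\<Prod>k<q. if f k = g (\<tau> k) then 1 else 0)"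
      using dual by (intro prod.cong) auto
    also have "\<dots> = ?hit f \<tau>"
      by (induction q) (auto simp: lessThan_Suc)
    finally show "(\<Prod>k<q. \<xi> (f k) ((e \<circ> g) (\<tau> k))) = ?hit f \<tau>" .
  qed
  have hits: "(\<Sum>f\<in>?F. \<beta> (e \<circ> f) * ?hit f \<tau>) = of_int (sign \<tau>) * \<beta> (e \<circ> g)" if \<tau>: "\<tau> permutes {..<q}" for \<tau>
  proof -
    define f0 where "f0 = restrict (g \<circ> \<tau>) {..<q}"
    have "f0 \<in> ?F" unfolding f0_def using g permutes_lessThan[OF \<tau>] by auto
    have "(\<forall>k\<in>{..<q}. f k = g (\<tau> k)) \<longleftrightarrow> f = f0" if "f \<in> ?F" for f
      using that unfolding f0_def by (auto simp: PiE_iff fun_eq_iff extensional_def)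
    then have "(\<Sum>f\<in>?F. \<beta> (e \<circ> f) * ?hit f \<tau>) = (\<Sum>f\<in>?F. if f = f0 then \<beta> (e \<circ> f) else 0)"
      by (intro sum.cong) auto
    also have "\<dots> = \<beta> (e \<circ> f0)" using finF \<open>f0 \<in> ?F\<close> by simp
    also have "\<dots> = \<beta> ((e \<circ> g) \<circ> \<tau>)" by (rule form_cong[OF \<beta>]) (simp add: f0_def)
    also have "\<dots> = of_int (sign \<tau>) * \<beta> (e \<circ> g)" by (rule form_permute[OF \<beta> \<tau>])
    finally show ?thesis .
  qed
  have "(\<Sum>f\<in>?F. \<beta> (e \<circ> f) / fact q * wedge_list q (\<lambda>k. \<xi> (f k)) (e \<circ> g))
      = (\<Sum>\<tau>\<in>?P. of_int (sign \<tau>) / fact q * (\<Sum>f\<in>?F. \<beta> (e \<circ> f) * ?hit f \<tau>))"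
    using wedge_list_eq
    by (simp add: sum_distrib_left sum_distrib_right sum.swap[of _ ?F] algebra_simps cong: sum.cong)
  also have "\<dots> = (\<Sum>\<tau>\<in>?P. \<beta> (e \<circ> g) / fact q)"
    using hits by (intro sum.cong refl) (simp add: field_simps)
  also have "\<dots> = \<beta> (e \<circ> g)" by (simp add: card_permutations)
  finally show ?thesis .
qed

lemma dual_basis_expansion:
  fixes \<xi> :: "nat \<Rightarrow> 'v::euclidean_space \<Rightarrow> real"
  assumes full: "fun_basis_of n \<xi> {\<eta>. linear \<eta>}"
    and dual: "\<And>k j. k < n \<Longrightarrow> j < n \<Longrightarrow> \<xi> k (e j) = (if k = j then 1 else 0)"
  shows "x = (\<Sum>k<n. \<xi> k x *\<^sub>R e k)"
proof -
  define y where "y = x - (\<Sum>k<n. \<xi> k x *\<^sub>R e k)"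
  have lin: "\<And>k. k < n \<Longrightarrow> linear (\<xi> k)" using full unfolding fun_basis_of_def by auto
  have "\<forall>k<n. \<xi> k y = 0" using frame_decomposition(1)[OF lin dual] unfolding y_def by auto
  moreover obtain c where "\<forall>z. y \<bullet> z = (\<Sum>i<n. c i * \<xi> i z)"
    using full bounded_linear.linear[OF bounded_linear_inner_right, of y]
    unfolding fun_basis_of_def by blast
  ultimately have "y \<bullet> y = 0" by simp
  then show ?thesis unfolding y_def by simp
qed

section \<open>Frames adapted to the divisibility space\<close>

locale polar_frame =
  fixes p :: nat and \<mu> :: "(nat \<Rightarrow> 'v::euclidean_space) \<Rightarrow> real" and s :: nat
    and \<xi> :: "nat \<Rightarrow> 'v \<Rightarrow> real" and e :: "nat \<Rightarrow> 'v"
  assumes form: "is_form p \<mu>" and nonzero: "\<mu> \<noteq> (\<lambda>v. 0)"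
    and basis: "fun_basis_of s \<xi> (div_polar p \<mu>)"
    and dual: "\<And>k j. k < s \<Longrightarrow> j < s \<Longrightarrow> \<xi> k (e j) = (if k = j then 1 else 0)"
begin

abbreviation "D \<equiv> div_space UNIV p \<mu>"

lemma polar_linear: "k < s \<Longrightarrow> linear (\<xi> k)"
  using fun_basis_of_div_polar(1)[OF basis] .

lemma is_form_polar_wedge_list: "is_form s (wedge_list s \<xi>)"
  by (rule is_form_wedge_list) (rule polar_linear)

lemma D_eq: "D = {x. \<forall>k<s. \<xi> k x = 0}"
  using div_space_eq_common_kernel[OF basis] .

lemma inj_on_frame: "inj_on e {..<s}"
proof (rule inj_onI)
  fix i j assume "i \<in> {..<s}" "j \<in> {..<s}" "e i = e j"
  then show "i = j" using dual[of i i] dual[of i j] by (auto split: if_splits)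
qed

lemma span_frame: "x \<in> span (e ` {..<s} \<union> D)"
  unfolding D_eq by (rule frame_decomposition(2)[OF polar_linear dual])

lemma vanishes_if_polar_vanishes:
  assumes k: "k < s" and zero: "\<And>i. i < p \<Longrightarrow> \<xi> k (v i) = 0"
  shows "\<mu> v = 0"
  using wedge_one_form_eq_0_iff[OF polar_linear[OF k] form, of "e k"]
    fun_basis_of_div_polar(2)[OF basis k] dual[OF k k] zero by auto

lemma polar_vanishes_if_missing:
  assumes "x \<in> e ` {..<s} \<union> D" and "k < s" and "x \<noteq> e k"
  shows "\<xi> k x = 0"
  using assms dual unfolding D_eq by auto

lemma s_le_p: "s \<le> p"
proof (rule ccontr)
  assume "\<not> s \<le> p"
  have "\<mu> v = 0" for v
  proof (rule forms_eq_on_span[OF form is_form_zero, of "e ` {..<s} \<union> D"])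
    fix v assume v: "\<forall>i<p. v i \<in> e ` {..<s} \<union> D"
    have "\<exists>k<s. \<forall>i<p. v i \<noteq> e k"
    proof (rule ccontr)
      assume none_missing: "\<not> (\<exists>k<s. \<forall>i<p. v i \<noteq> e k)"
      have "e k \<in> v ` {..<p}" if k: "k < s" for k
      proof -
        obtain i where "i < p" "e k = v i" using none_missing k by auto
        then show ?thesis by simp
      qed
      then have "e ` {..<s} \<subseteq> v ` {..<p}" by auto
      then have "card (e ` {..<s}) \<le> card (v ` {..<p})" by (rule card_mono[rotated]) simp
      also have "\<dots> \<le> p" using card_image_le[of "{..<p}" v] by simp
      finally show False using card_image[OF inj_on_frame] \<open>\<not> s \<le> p\<close> by simp
    qed
    then obtain k where k: "k < s" "\<forall>i<p. v i \<noteq> e k" by blast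
    show "\<mu> v = 0"
    proof (rule vanishes_if_polar_vanishes[OF k(1)])
      fix i assume "i < p"
      then show "\<xi> k (v i) = 0" using polar_vanishes_if_missing[of "v i" k] v k by simp
    qed
  qed (use span_frame in auto)
  with nonzero show False by auto
qed

lemma polar_append_args:
  assumes "k < s" "i < p" "\<forall>j<p - s. d j \<in> D"
  shows "\<xi> k (append_args s e d i) = (if i = k then 1 else 0)"
proof (cases "i < s")
  case False
  then have "d (i - s) \<in> D" using assms by simp
  then show ?thesis using False assms(1) unfolding D_eq by (simp add: append_args_def)
qed (use assms dual in \<open>simp add: append_args_def\<close>)

lemma vanishes_if_vanishes_on_frame:
  assumes D0: "D0 \<subseteq> D" and zero: "\<And>d. (\<forall>i<p - s. d i \<in> D0) \<Longrightarrow> \<mu> (append_args s e d) = 0"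
    and v: "\<forall>i<p. v i \<in> span (e ` {..<s} \<union> D0)"
  shows "\<mu> v = 0"
proof (rule forms_eq_on_frame[OF form is_form_zero s_le_p inj_on_frame _ _ v])
  fix v k assume v: "\<forall>i<p. v i \<in> e ` {..<s} \<union> D0" and k: "k < s" and missing: "\<forall>i<p. v i \<noteq> e k"
  show "\<mu> v = 0"
  proof (rule vanishes_if_polar_vanishes[OF k])
    fix i assume "i < p"
    then show "\<xi> k (v i) = 0" using polar_vanishes_if_missing[of "v i" k] v k missing D0 by blast
  qed
next
  fix v assume "\<forall>i<s. v i = e i" "\<forall>i. s \<le> i \<and> i < p \<longrightarrow> v i \<in> D0"
  then have v: "append_args s e (\<lambda>i. v (s + i)) = v" "\<forall>i<p - s. v (s + i) \<in> D0"
    by (auto simp: append_args_def fun_eq_iff)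
  from zero[OF v(2)] show "\<mu> v = 0" unfolding v(1) .
qed

lemma frame_value_nonzero: "\<exists>d. (\<forall>i<p - s. d i \<in> D) \<and> \<mu> (append_args s e d) \<noteq> 0"
proof (rule ccontr)
  assume "\<not> ?thesis"
  then have zero: "\<And>d. (\<forall>i<p - s. d i \<in> D) \<Longrightarrow> \<mu> (append_args s e d) = 0" by blast
  have "\<mu> v = 0" for v
    by (rule vanishes_if_vanishes_on_frame[OF subset_refl zero]) (use span_frame in auto)
  with nonzero show False by auto
qed

lemma eq_if_eq_on_frame:
  assumes h: "is_form p h" and vanish: "\<And>v k. k < s \<Longrightarrow> (\<forall>i<p. \<xi> k (v i) = 0) \<Longrightarrow> h v = 0"
    and frame: "\<And>d. (\<forall>i<p - s. d i \<in> D) \<Longrightarrow> h (append_args s e d) = \<mu> (append_args s e d)"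
  shows "h = \<mu>"
proof (rule forms_eq_if_eq_on_frame[OF _ _ h form s_le_p])
  show "\<And>k. k < s \<Longrightarrow> linear (\<xi> k)" by (rule polar_linear)
  show "\<And>k j. k < s \<Longrightarrow> j < s \<Longrightarrow> \<xi> k (e j) = (if k = j then 1 else 0)" by (rule dual)
next
  fix v k assume k: "k < s" and zero: "\<forall>i<p. \<xi> k (v i) = 0"
  have "h v = 0" by (rule vanish[OF k zero])
  moreover have "\<mu> v = 0" by (rule vanishes_if_polar_vanishes[OF k]) (use zero in simp)
  ultimately show "h v = \<mu> v" by simp
next
  fix d assume "\<forall>i<p - s. \<forall>k<s. \<xi> k (d i) = 0"
  then show "h (append_args s e d) = \<mu> (append_args s e d)" by (intro frame) (simp add: D_eq)
qed

lemma wedge_eval_on_frame: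
  assumes \<zeta>: "is_form (p - s) \<zeta>" and d: "\<forall>i<p - s. d i \<in> D"
  shows "wedge s (p - s) (wedge_list s \<xi>) \<zeta> (append_args s e d) = \<zeta> d"
proof -
  have "wedge s (p - s) (wedge_list s \<xi>) \<zeta> (append_args s e d) = \<zeta> (\<lambda>j. append_args s e d (s + j))"
    by (rule wedge_wedge_list_eval[OF _ \<zeta>]) (use polar_linear polar_append_args[OF _ _ d] s_le_p in auto)
  then show ?thesis by (simp add: append_args_def)
qed

lemma factor_eq_on_D:
  assumes \<zeta>: "is_form (p - s) \<zeta>" and \<mu>_eq: "\<mu> = wedge s (p - s) (wedge_list s \<xi>) \<zeta>"
    and d: "\<forall>i<p - s. d i \<in> D"
  shows "\<zeta> d = \<mu> (append_args s e d)"
  using wedge_eval_on_frame[OF \<zeta> d] \<mu>_eq by simp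

lemma factorization_if_eq_on_D:
  assumes \<zeta>: "is_form (p - s) \<zeta>"
    and eq: "\<And>d. (\<forall>i<p - s. d i \<in> D) \<Longrightarrow> \<zeta> d = \<mu> (append_args s e d)"
  shows "\<mu> = wedge s (p - s) (wedge_list s \<xi>) \<zeta>"
proof (rule eq_if_eq_on_frame[symmetric])
  have "is_form (s + (p - s)) (wedge s (p - s) (wedge_list s \<xi>) \<zeta>)"
    by (rule is_form_wedge[OF is_form_polar_wedge_list \<zeta>])
  then show "is_form p (wedge s (p - s) (wedge_list s \<xi>) \<zeta>)" using s_le_p by simp
next
  fix v k assume "k < s" "\<forall>i<p. \<xi> k (v i) = 0"
  then show "wedge s (p - s) (wedge_list s \<xi>) \<zeta> v = 0"
    using s_le_p by (intro wedge_wedge_list_eq_0_row) auto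
qed (simp add: wedge_eval_on_frame[OF \<zeta>] eq)

lemma frame_value_not_divisible:
  fixes \<eta> :: "'v \<Rightarrow> real"
  assumes \<eta>: "linear \<eta>" and y: "y \<in> D" "\<eta> y = 1"
    and zero: "\<And>d. (\<forall>i<p - s. d i \<in> D \<and> \<eta> (d i) = 0) \<Longrightarrow> \<mu> (append_args s e d) = 0"
  shows False
proof -
  define \<eta>' where "\<eta>' x = \<eta> x - (\<Sum>k<s. \<eta> (e k) * \<xi> k x)" for x
  have "linear \<eta>'" unfolding \<eta>'_def
    by (intro linear_compose_sub \<eta> linear_compose_sum ballI linear_mult_left_real polar_linear) auto
  have "\<eta>' y = 1" using y unfolding \<eta>'_def D_eq by simp
  let ?D0 = "D \<inter> {x. \<eta> x = 0}"
  have "\<mu> v = 0" if v: "\<forall>i<p. \<eta>' (v i) = 0" for v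
  proof (rule vanishes_if_vanishes_on_frame[of ?D0])
    show "\<forall>i<p. v i \<in> span (e ` {..<s} \<union> ?D0)"
    proof (intro allI impI)
      fix i assume i: "i < p"
      define d where "d = v i - (\<Sum>k<s. \<xi> k (v i) *\<^sub>R e k)"
      have "d \<in> D" unfolding d_def D_eq by (rule frame_decomposition(1)[OF polar_linear dual])
      moreover have "\<eta> d = \<eta>' (v i)"
        unfolding d_def \<eta>'_def using \<eta> by (simp add: linear_diff linear_sum linear_scale mult.commute)
      ultimately have "d \<in> span (e ` {..<s} \<union> ?D0)" using v i by (intro span_base) auto
      moreover have "(\<Sum>k<s. \<xi> k (v i) *\<^sub>R e k) \<in> span (e ` {..<s} \<union> ?D0)"
        by (intro span_sum span_mul span_base) auto
      ultimately show "v i \<in> span (e ` {..<s} \<union> ?D0)"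
        unfolding d_def by (metis diff_add_cancel span_add)
    qed
  qed (use zero in auto)
  then have "\<eta>' \<in> div_polar p \<mu>"
    using wedge_one_form_eq_0_iff[OF \<open>linear \<eta>'\<close> form \<open>\<eta>' y = 1\<close>] \<open>linear \<eta>'\<close>
    unfolding div_polar_def by blast
  then obtain c where "\<forall>x. \<eta>' x = (\<Sum>i<s. c i * \<xi> i x)"
    using basis unfolding fun_basis_of_def by blast
  with y \<open>\<eta>' y = 1\<close> show False unfolding D_eq by simp
qed

lemma factor_indivisible_on_D:
  assumes \<zeta>: "is_form (p - s) \<zeta>" and \<mu>_eq: "\<mu> = wedge s (p - s) (wedge_list s \<xi>) \<zeta>"
  shows "indivisible_in D (p - s) \<zeta>"
proof -
  have "x \<in> div_space D (p - s) \<zeta>" if x: "x \<in> D" for x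
    unfolding div_space_def[of D]
  proof (intro CollectI conjI x allI impI)
    fix \<eta> :: "'v \<Rightarrow> real"
    assume "linear \<eta> \<and> (\<forall>v. (\<forall>i<p - s + 1. v i \<in> D) \<longrightarrow> wedge 1 (p - s) (one_form \<eta>) \<zeta> v = 0)"
    then have \<eta>: "linear \<eta>"
      and wedge: "\<And>v. (\<forall>i<p - s + 1. v i \<in> D) \<Longrightarrow> wedge 1 (p - s) (one_form \<eta>) \<zeta> v = 0" by auto
    show "\<eta> x = 0"
    proof (rule ccontr)
      assume "\<eta> x \<noteq> 0"
      define y where "y = (1 / \<eta> x) *\<^sub>R x"
      have y: "y \<in> D" "\<eta> y = 1"
        using x \<eta> \<open>\<eta> x \<noteq> 0\<close> polar_linear unfolding y_def D_eq by (auto simp: linear_scale)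
      show False
      proof (rule frame_value_not_divisible[OF \<eta> y])
        fix d assume d: "\<forall>i<p - s. d i \<in> D \<and> \<eta> (d i) = 0"
        have "\<zeta> d = 0"
          by (rule form_vanishes_if_wedge_one_form_eq_0[OF \<eta> \<zeta> y(2) y(1) wedge]) (use d in auto)
        then show "\<mu> (append_args s e d) = 0" using factor_eq_on_D[OF \<zeta> \<mu>_eq] d by simp
      qed
    qed
  qed
  then show ?thesis unfolding indivisible_in_def div_space_def[of D] by blast
qed

lemma factor_indivisible:
  assumes \<zeta>: "is_form (p - s) \<zeta>" and \<mu>_eq: "\<mu> = wedge s (p - s) (wedge_list s \<xi>) \<zeta>"
  shows "indivisible_in UNIV (p - s) \<zeta>"
proof -
  obtain d where "\<forall>i<p - s. d i \<in> D" "\<mu> (append_args s e d) \<noteq> 0"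
    using frame_value_nonzero by blast
  then show ?thesis
    using indivisible_in_UNIV_if_indivisible_in[OF \<zeta> factor_indivisible_on_D[OF \<zeta> \<mu>_eq]]
      factor_eq_on_D[OF \<zeta> \<mu>_eq] by auto
qed

lemma factor_unique_on_D:
  assumes frame': "polar_frame p \<mu> s \<xi>' e'"
    and \<zeta>: "is_form (p - s) \<zeta>" and \<mu>_eq: "\<mu> = wedge s (p - s) (wedge_list s \<xi>) \<zeta>"
    and \<zeta>': "is_form (p - s) \<zeta>'" and \<mu>_eq': "\<mu> = wedge s (p - s) (wedge_list s \<xi>') \<zeta>'"
  shows "\<exists>c. c \<noteq> 0 \<and> (\<forall>v. (\<forall>i<p - s. v i \<in> D) \<longrightarrow> \<zeta>' v = c * \<zeta> v)"
proof -
  interpret frame': polar_frame p \<mu> s \<xi>' e' by (rule frame')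
  define c where "c = wedge_list s \<xi> e'"
  have compare: "\<mu> (append_args s e' d) = c * \<mu> (append_args s e d)" if d: "\<forall>i<p - s. d i \<in> D" for d
  proof -
    let ?g = "\<lambda>x. \<mu> (append_args s x d)"
    have "?g = (\<lambda>x. ?g e * wedge_list s \<xi> x)"
    proof (rule forms_eq_if_eq_on_frame[where q = s, OF _ _ _ _ order_refl])
      show "\<And>k. k < s \<Longrightarrow> linear (\<xi> k)" by (rule polar_linear)
      show "\<And>k j. k < s \<Longrightarrow> j < s \<Longrightarrow> \<xi> k (e j) = (if k = j then 1 else 0)" by (rule dual)
      show "is_form s ?g" by (rule is_form_append_args_left[OF form s_le_p])
      show "is_form s (\<lambda>x. ?g e * wedge_list s \<xi> x)"
        by (rule is_form_cmul[OF is_form_polar_wedge_list])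
    next
      fix x k assume k: "k < s" and zero: "\<forall>i<s. \<xi> k (x i) = 0"
      have "?g x = 0"
        by (rule vanishes_if_polar_vanishes[OF k]) (use zero d k in \<open>auto simp: D_eq append_args_def\<close>)
      moreover have "wedge_list s \<xi> x = 0" by (rule wedge_list_eq_0_row[OF k]) (use zero in auto)
      ultimately show "?g x = ?g e * wedge_list s \<xi> x" by simp
    next
      fix d' :: "nat \<Rightarrow> 'v"
      have "append_args s (append_args s e d') d = append_args s e d"
        by (auto simp: append_args_def fun_eq_iff)
      moreover have "wedge_list s \<xi> (append_args s e d') = 1"
        by (rule wedge_list_dual) (use dual in \<open>auto simp: append_args_def\<close>)
      ultimately show "?g (append_args s e d') = ?g e * wedge_list s \<xi> (append_args s e d')"
        by simp
    qed
    then show ?thesis unfolding c_def by (metis mult.commute)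
  qed
  have "c \<noteq> 0"
  proof
    assume "c = 0"
    obtain d where "\<forall>i<p - s. d i \<in> D" "\<mu> (append_args s e' d) \<noteq> 0"
      using frame'.frame_value_nonzero by blast
    with compare \<open>c = 0\<close> show False by simp
  qed
  moreover have "\<zeta>' v = c * \<zeta> v" if "\<forall>i<p - s. v i \<in> D" for v
    using frame'.factor_eq_on_D[OF \<zeta>' \<mu>_eq' that] compare[OF that] factor_eq_on_D[OF \<zeta> \<mu>_eq that]
    by simp
  ultimately show ?thesis by blast
qed

lemma decomposable_if_s_eq_p:
  assumes sp: "s = p"
  shows "decomposable p \<mu>"
proof -
  have "\<mu> = wedge s (p - s) (wedge_list s \<xi>) (\<lambda>_. \<mu> e)"
  proof (rule factorization_if_eq_on_D)
    show "is_form (p - s) (\<lambda>_. \<mu> e)" using sp by (simp add: is_form_def)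
    show "\<mu> e = \<mu> (append_args s e d)" for d
      by (rule form_cong[OF form]) (use sp in \<open>simp add: append_args_def\<close>)
  qed
  then have "\<mu> = (\<lambda>v. \<mu> e * wedge_list p \<xi> v)"
    using wedge_zero_right[OF is_form_polar_wedge_list] sp by simp
  then show ?thesis
    unfolding decomposable_def using polar_linear sp by (intro exI[of _ "\<mu> e"] exI[of _ \<xi>]) auto
qed

lemma decomposable_if_p_eq_Suc_s:
  assumes sp: "p = Suc s"
  shows "decomposable p \<mu>"
proof -
  define \<eta> where "\<eta> x = \<mu> (append_args s e (\<lambda>_. x))" for x
  have "is_form 1 (\<lambda>d. \<mu> (append_args s e d))" using is_form_append_args[OF form s_le_p, of e] sp by simp
  then have "linear (\<lambda>x. \<mu> (append_args s e ((\<lambda>_. 0)(0 := x))))" by (rule form_linear_arg) simp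
  moreover have "\<mu> (append_args s e ((\<lambda>_. 0)(0 := x))) = \<eta> x" for x
    unfolding \<eta>_def by (rule form_cong[OF form]) (use sp in \<open>auto simp: append_args_def\<close>)
  ultimately have "linear \<eta>" by simp
  define \<xi>' where "\<xi>' = \<xi>(s := \<eta>)"
  have lin': "linear (\<xi>' k)" if "k < p" for k
    using that polar_linear \<open>linear \<eta>\<close> sp unfolding \<xi>'_def by (cases "k = s") auto
  have "wedge_list p \<xi>' = \<mu>"
  proof (rule eq_if_eq_on_frame)
    show "is_form p (wedge_list p \<xi>')" by (rule is_form_wedge_list[OF lin'])
  next
    fix v k assume "k < s" "\<forall>i<p. \<xi> k (v i) = 0"
    then show "wedge_list p \<xi>' v = 0"
      using sp by (intro wedge_list_eq_0_row[of k]) (auto simp: \<xi>'_def)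
  next
    fix d assume d: "\<forall>i<p - s. d i \<in> D"
    have "\<eta> (e i) = 0" if "i < s" for i
      unfolding \<eta>_def by (rule form_alternating[OF form, of i s]) (use that sp in \<open>auto simp: append_args_def\<close>)
    then have "wedge_list p \<xi>' (append_args s e d) = (\<Prod>k<p. \<xi>' k (append_args s e d k))"
      using polar_append_args[OF _ _ d] sp by (intro wedge_list_diagonal) (auto simp: \<xi>'_def append_args_def)
    also have "\<dots> = (\<Prod>k<s. \<xi>' k (append_args s e d k)) * \<xi>' s (append_args s e d s)"
      using sp by simp
    also have "(\<Prod>k<s. \<xi>' k (append_args s e d k)) = 1"
      using dual by (intro prod.neutral) (auto simp: \<xi>'_def append_args_def)
    also have "\<xi>' s (append_args s e d s) = \<eta> (d 0)" by (simp add: \<xi>'_def append_args_def)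
    also have "\<dots> = \<mu> (append_args s e d)"
      unfolding \<eta>_def by (rule form_cong[OF form]) (use sp in \<open>auto simp: append_args_def\<close>)
    finally show "wedge_list p \<xi>' (append_args s e d) = \<mu> (append_args s e d)" by simp
  qed
  then show ?thesis
    unfolding decomposable_def using lin' by (intro exI[of _ 1] exI[of _ \<xi>']) auto
qed

text \<open>The factors of a decomposable \<open>\<mu>\<close> lie in \<open>D'\<close>, so they vanish on \<open>D\<close>; for \<open>s < p\<close> this
  kills \<open>\<mu>(e\<^sub>1, \<dots>, e\<^sub>s, -)\<close> on \<open>D\<close>.\<close>

lemma s_eq_p_if_decomposable:
  assumes "decomposable p \<mu>"
  shows "s = p"
proof (rule ccontr)
  assume "s \<noteq> p"
  then have "s < p" using s_le_p by simp
  from assms obtain c \<zeta> where lin: "\<forall>i<p. linear (\<zeta> i)" and \<mu>_eq: "\<mu> = (\<lambda>v. c * wedge_list p \<zeta> v)"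
    unfolding decomposable_def by blast
  have factor_vanishes: "\<mu> v = 0" if "k < p" "\<forall>i<p. \<zeta> k (v i) = 0" for k v
    using wedge_list_eq_0_row[of k p \<zeta> v] that unfolding \<mu>_eq by simp
  have "\<zeta> k \<in> div_polar p \<mu>" if k: "k < p" for k
  proof -
    have "\<exists>y. \<zeta> k y \<noteq> 0"
    proof (rule ccontr)
      assume "\<not> (\<exists>y. \<zeta> k y \<noteq> 0)"
      then have "\<mu> v = 0" for v using factor_vanishes[OF k] by simp
      with nonzero show False by auto
    qed
    then obtain y0 where "\<zeta> k y0 \<noteq> 0" by blast
    then have y: "\<zeta> k ((1 / \<zeta> k y0) *\<^sub>R y0) = 1" using lin k by (simp add: linear_scale)
    have "wedge 1 p (one_form (\<zeta> k)) \<mu> = (\<lambda>v. 0)"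
      by (subst wedge_one_form_eq_0_iff[of "\<zeta> k" p \<mu>, OF _ form y]) (use lin k factor_vanishes[OF k] in auto)
    then show ?thesis using lin k unfolding div_polar_def by simp
  qed
  then have factors_vanish: "\<zeta> k (d 0) = 0" if "k < p" "\<forall>i<p - s. d i \<in> D" for k d
    using that \<open>s < p\<close> unfolding div_space_UNIV_eq by simp
  then have "\<mu> (append_args s e d) = 0" if "\<forall>i<p - s. d i \<in> D" for d
  proof -
    have "wedge_list p \<zeta> (append_args s e d) = 0"
      by (rule wedge_list_eq_0_col[OF \<open>s < p\<close>]) (use that \<open>s < p\<close> factors_vanish in \<open>auto simp: append_args_def\<close>)
    then show ?thesis using \<mu>_eq by simp
  qed
  then show False using frame_value_nonzero by blast
qed

lemma factorization_in_basis:
  assumes full: "fun_basis_of n \<xi> {\<eta>. linear \<eta>}"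
    and dual_n: "\<And>k j. k < n \<Longrightarrow> j < n \<Longrightarrow> \<xi> k (e j) = (if k = j then 1 else 0)" and "s \<le> n"
  shows "\<exists>\<zeta>. is_form (p - s) \<zeta> \<and> \<mu> = wedge s (p - s) (wedge_list s \<xi>) \<zeta> \<and>
           (\<exists>(m::nat) c g. (\<forall>j<m. \<forall>k<p - s. s \<le> g j k \<and> g j k < n) \<and>
              \<zeta> = (\<lambda>v. \<Sum>j<m. c j * wedge_list (p - s) (\<lambda>k. \<xi> (g j k)) v))"
proof -
  define q where "q = p - s"
  define F where "F = PiE {..<q} (\<lambda>_. {s..<n})"
  define \<zeta>\<^sub>0 where "\<zeta>\<^sub>0 d = \<mu> (append_args s e d)" for d
  define \<zeta> where "\<zeta> v = (\<Sum>f\<in>F. \<zeta>\<^sub>0 (e \<circ> f) / fact q * wedge_list q (\<lambda>k. \<xi> (f k)) v)" for v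
  have "finite F" unfolding F_def by (intro finite_PiE) auto
  have lin_n: "linear (\<xi> k)" if "k < n" for k using full that unfolding fun_basis_of_def by auto
  have \<zeta>\<^sub>0: "is_form q \<zeta>\<^sub>0" unfolding \<zeta>\<^sub>0_def q_def by (rule is_form_append_args[OF form s_le_p])
  have \<zeta>: "is_form q \<zeta>"
    unfolding \<zeta>_def[abs_def] using \<open>finite F\<close> lin_n
    by (intro is_form_sum is_form_wedge_list) (auto simp: F_def PiE_iff)
  have D_span: "x \<in> span (e ` {s..<n})" if "x \<in> D" for x
  proof -
    have "x = (\<Sum>k<n. \<xi> k x *\<^sub>R e k)" by (rule dual_basis_expansion[OF full dual_n])
    also have "\<dots> = (\<Sum>k\<in>{s..<n}. \<xi> k x *\<^sub>R e k)"
      using that \<open>s \<le> n\<close> unfolding D_eq by (intro sum.mono_neutral_right) auto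
    also have "\<dots> \<in> span (e ` {s..<n})" by (intro span_sum span_mul span_base) auto
    finally show ?thesis .
  qed
  have \<zeta>_eq: "\<zeta> d = \<zeta>\<^sub>0 d" if "\<forall>i<q. d i \<in> D" for d
  proof (rule forms_eq_on_span[OF \<zeta> \<zeta>\<^sub>0, of "e ` {s..<n}"])
    fix d assume "\<forall>i<q. d i \<in> e ` {s..<n}"
    define g where "g i = (SOME j. j \<in> {s..<n} \<and> d i = e j)" for i
    have g: "g i \<in> {s..<n} \<and> d i = e (g i)" if "i < q" for i
      unfolding g_def by (rule someI_ex) (use \<open>\<forall>i<q. d i \<in> e ` {s..<n}\<close> that in blast)
    have "\<zeta> d = \<zeta> (e \<circ> g)" "\<zeta>\<^sub>0 d = \<zeta>\<^sub>0 (e \<circ> g)"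
      using g by (auto intro: form_cong[OF \<zeta>] form_cong[OF \<zeta>\<^sub>0])
    moreover have "\<zeta> (e \<circ> g) = \<zeta>\<^sub>0 (e \<circ> g)"
      unfolding \<zeta>_def F_def using g dual_n
      by (intro sum_wedge_lists_dual_eval[OF _ _ \<zeta>\<^sub>0]) auto
    ultimately show "\<zeta> d = \<zeta>\<^sub>0 d" by simp
  qed (use that D_span in auto)
  have \<mu>_eq: "\<mu> = wedge s (p - s) (wedge_list s \<xi>) \<zeta>"
    by (rule factorization_if_eq_on_D[OF \<zeta>[unfolded q_def]]) (use \<zeta>_eq in \<open>simp add: q_def \<zeta>\<^sub>0_def\<close>)
  obtain h where h: "bij_betw h {..<card F} F"
    using ex_bij_betw_nat_finite[OF \<open>finite F\<close>] by (metis atLeast0LessThan)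
  show ?thesis
  proof (intro exI conjI)
    show "is_form (p - s) \<zeta>" using \<zeta> by (simp add: q_def)
    show "\<mu> = wedge s (p - s) (wedge_list s \<xi>) \<zeta>" by (rule \<mu>_eq)
    have "h j \<in> F" if "j < card F" for j using h that by (auto simp: bij_betw_def)
    then show "\<forall>j<card F. \<forall>k<p - s. s \<le> h j k \<and> h j k < n"
      unfolding F_def q_def by (auto simp: PiE_iff)
    show "\<zeta> = (\<lambda>v. \<Sum>j<card F. \<zeta>\<^sub>0 (e \<circ> h j) / fact q * wedge_list (p - s) (\<lambda>k. \<xi> (h j k)) v)"
      unfolding \<zeta>_def q_def by (intro ext sum.reindex_bij_betw[OF h, symmetric])
  qed
qed

lemma polar_dim_properties: "int s \<noteq> int p - 1 \<and> s \<le> p \<and> (s = p \<longleftrightarrow> decomposable p \<mu>)"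
proof (intro conjI)
  show "int s \<noteq> int p - 1"
  proof
    assume "int s = int p - 1"
    then have "p = Suc s" by simp
    then have "s = p" by (intro s_eq_p_if_decomposable decomposable_if_p_eq_Suc_s)
    with \<open>int s = int p - 1\<close> show False by simp
  qed
  show "s \<le> p" by (rule s_le_p)
  show "s = p \<longleftrightarrow> decomposable p \<mu>"
    using decomposable_if_s_eq_p s_eq_p_if_decomposable by blast
qed

end

section \<open>Kernel and rank\<close>

lemma form_kernel_arg:
  assumes form: "is_form p \<mu>" and p: "0 < p" and x: "x \<in> form_kernel p \<mu>" and i: "i < p"
  shows "\<mu> (w(i := x)) = 0"
proof (cases "i = 0")
  case True
  then show ?thesis using x p unfolding form_kernel_def by simp
next
  case False
  let ?u = "(w(i := x)) \<circ> Transposition.transpose 0 i"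
  have "\<mu> (?u(0 := x)) = 0" using x p unfolding form_kernel_def by simp
  moreover have "?u(0 := x) = ?u" by (auto simp: fun_eq_iff Transposition.transpose_def)
  ultimately have "\<mu> ?u = 0" by simp
  moreover have "\<mu> ?u = - \<mu> (w(i := x))" by (rule form_transpose[OF form p i]) (use False in simp)
  ultimately show ?thesis by simp
qed

lemma subspace_form_kernel:
  assumes form: "is_form p \<mu>" and p: "0 < p"
  shows "subspace (form_kernel p \<mu>)"
  unfolding subspace_def
proof (intro conjI ballI allI)
  show "0 \<in> form_kernel p \<mu>"
    unfolding form_kernel_def using form_scale_arg[OF form p, of _ 0 0] by simp
  fix x y c assume x: "x \<in> form_kernel p \<mu>" and y: "y \<in> form_kernel p \<mu>"
  show "x + y \<in> form_kernel p \<mu>"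
    unfolding form_kernel_def using form_add_arg[OF form p] form_kernel_arg[OF form p _ p] x y by simp
  show "c *\<^sub>R x \<in> form_kernel p \<mu>"
    unfolding form_kernel_def using form_scale_arg[OF form p] form_kernel_arg[OF form p x p] by simp
qed

lemma form_cong_mod_kernel:
  assumes form: "is_form p \<mu>" and p: "0 < p" and vw: "\<And>i. i < p \<Longrightarrow> v i - w i \<in> form_kernel p \<mu>"
  shows "\<mu> v = \<mu> w"
proof -
  have "\<mu> (\<lambda>i. if i < k then w i else v i) = \<mu> v" if "k \<le> p" for k
    using that
  proof (induction k)
    case (Suc k)
    let ?u = "\<lambda>i. if i < k then w i else v i"
    have k: "k < p" using Suc.prems by simp
    have "w k - v k \<in> form_kernel p \<mu>"
      using subspace_neg[OF subspace_form_kernel[OF form p] vw[OF k]] by simp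
    then have "\<mu> (?u(k := w k - v k)) = 0" by (rule form_kernel_arg[OF form p _ k])
    then have "\<mu> (?u(k := v k + (w k - v k))) = \<mu> (?u(k := v k))"
      using form_add_arg[OF form k, of ?u "v k" "w k - v k"] by simp
    moreover have "?u(k := v k + (w k - v k)) = (\<lambda>i. if i < Suc k then w i else v i)" "?u(k := v k) = ?u"
      by (auto simp: fun_eq_iff)
    ultimately show ?case using Suc by simp
  qed simp
  from this[OF order_refl] show ?thesis
    using form_cong[OF form, of w "\<lambda>i. if i < p then w i else v i"] by simp
qed

lemma form_kernel_complement_bound:
  fixes \<mu> :: "(nat \<Rightarrow> 'v::euclidean_space) \<Rightarrow> real" and f :: "'v \<Rightarrow> 'w::euclidean_space"
  assumes form: "is_form p \<mu>" and p: "0 < p" and W: "subspace W"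
    and f: "linear f" "range f \<subseteq> W" and \<nu>: "is_form p \<nu>" and pullback: "\<forall>v. \<mu> v = \<nu> (f \<circ> v)"
  shows "DIM('v) - dim (form_kernel p \<mu>) \<le> dim W"
proof -
  let ?Z = "form_kernel p \<mu>"
  define Zp where "Zp = {y. \<forall>x\<in>?Z. orthogonal x y}"
  have "subspace Zp" unfolding Zp_def by (rule subspace_orthogonal_to_vectors)
  have "dim Zp + dim ?Z = DIM('v)"
    using dim_subspace_orthogonal_to_vectors[OF subspace_form_kernel[OF form p] subspace_UNIV subset_UNIV]
    unfolding Zp_def by simp
  have kernel: "x \<in> ?Z" if "f x = 0" for x
  proof -
    have "\<mu> (w(0 := x)) = 0" for w
    proof -
      have "\<mu> (w(0 := x)) = \<nu> ((f \<circ> w)(0 := 0 *\<^sub>R 0))"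
        using pullback that by (simp add: fun_upd_comp)
      also have "\<dots> = 0 * \<nu> ((f \<circ> w)(0 := 0))" by (rule form_scale_arg[OF \<nu> p])
      finally show ?thesis by simp
    qed
    then show ?thesis unfolding form_kernel_def by simp
  qed
  have "inj_on f Zp"
  proof (rule inj_onI)
    fix x y assume "x \<in> Zp" "y \<in> Zp" "f x = f y"
    then have "x - y \<in> ?Z" "x - y \<in> Zp"
      using kernel[of "x - y"] f(1) subspace_diff[OF \<open>subspace Zp\<close>] by (simp_all add: linear_diff)
    then have "orthogonal (x - y) (x - y)" unfolding Zp_def by blast
    then show "x = y" by (simp add: orthogonal_def)
  qed
  moreover have "span Zp = Zp" using \<open>subspace Zp\<close> by (simp add: span_eq_iff)
  ultimately have "inj_on f (span Zp)" by (simp only:)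
  then have "dim (f ` Zp) = dim Zp" by (rule dim_image_eq[OF f(1)])
  then have "dim Zp \<le> dim W"
    using dim_subset[of "f ` Zp" W] f(2) by auto
  with \<open>dim Zp + dim ?Z = DIM('v)\<close> show ?thesis by simp
qed

lemma form_pullback_kernel_complement:
  fixes \<mu> :: "(nat \<Rightarrow> 'v::euclidean_space) \<Rightarrow> real"
  assumes form: "is_form p \<mu>" and p: "0 < p"
  obtains f where "linear f" and "range f \<subseteq> {y. \<forall>x\<in>form_kernel p \<mu>. orthogonal x y}"
    and "\<And>v. \<mu> v = \<mu> (f \<circ> v)"
proof -
  let ?Z = "form_kernel p \<mu>"
  obtain B where B: "B \<subseteq> ?Z" "pairwise orthogonal B" "\<And>x. x \<in> B \<Longrightarrow> norm x = 1"
    "independent B" "card B = dim ?Z" "span B = ?Z"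
    using orthonormal_basis_subspace[OF subspace_form_kernel[OF form p]] by blast
  have "finite B" using B(4) by (rule independent_imp_finite)
  have orthonormal: "b \<bullet> b' = (if b = b' then 1 else 0)" if "b \<in> B" "b' \<in> B" for b b'
    using B(2,3) that by (auto simp: pairwise_def orthogonal_def norm_eq_1)
  define P where "P x = (\<Sum>b\<in>B. (x \<bullet> b) *\<^sub>R b)" for x
  define f where "f x = x - P x" for x
  have "linear f" unfolding f_def P_def
    by (simp add: linear_iff inner_add_left scaleR_add_left sum.distrib scaleR_sum_right algebra_simps)
  moreover have "f x \<in> {y. \<forall>x\<in>?Z. orthogonal x y}" for x
  proof -
    have "b' \<bullet> f x = 0" if b': "b' \<in> B" for b'
    proof -
      have "b' \<bullet> P x = (\<Sum>b\<in>B. (x \<bullet> b) * (b' \<bullet> b))" unfolding P_def by (simp add: inner_sum_right)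
      also have "\<dots> = (\<Sum>b\<in>B. if b = b' then x \<bullet> b else 0)"
        using orthonormal b' by (intro sum.cong) auto
      also have "\<dots> = x \<bullet> b'" using \<open>finite B\<close> b' by simp
      finally show ?thesis unfolding f_def by (simp add: inner_diff_right inner_commute)
    qed
    then have "B \<subseteq> {z. z \<bullet> f x = 0}" by auto
    then have "span B \<subseteq> {z. z \<bullet> f x = 0}" by (rule span_minimal[OF _ subspace_hyperplane2])
    then show ?thesis unfolding B(6)[symmetric] orthogonal_def by auto
  qed
  then have "range f \<subseteq> {y. \<forall>x\<in>?Z. orthogonal x y}" by blast
  moreover have "\<mu> v = \<mu> (f \<circ> v)" for v
  proof (rule form_cong_mod_kernel[OF form p])
    fix i
    have "P (v i) \<in> span B" unfolding P_def by (intro span_sum span_mul span_base)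
    then show "v i - (f \<circ> v) i \<in> ?Z" unfolding f_def B(6) by simp
  qed
  ultimately show ?thesis by (rule that)
qed

lemma form_rank_eq:
  fixes \<mu> :: "(nat \<Rightarrow> 'v::euclidean_space) \<Rightarrow> real"
  assumes form: "is_form p \<mu>"
  shows "form_rank p \<mu> = DIM('v) - dim (form_kernel p \<mu>)"
proof (cases "p = 0")
  case True
  have "form_rank p \<mu> = 0" unfolding form_rank_def
  proof (rule Least_eq_0, intro exI conjI)
    show "subspace {0::'v}" "dim {0::'v} = 0" "linear (\<lambda>x::'v. 0::'v)" "range (\<lambda>x::'v. 0::'v) \<subseteq> {0}"
      by (auto simp: subspace_single_0 linear_iff)
    show "is_form p \<mu>" by (rule form)
    show "\<forall>v. \<mu> v = \<mu> ((\<lambda>x. 0) \<circ> v)" using True by (intro allI form_cong[OF form]) simp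
  qed
  moreover have "form_kernel p \<mu> = UNIV" using True unfolding form_kernel_def by simp
  ultimately show ?thesis by simp
next
  case False
  then have p: "0 < p" by simp
  let ?Zp = "{y. \<forall>x\<in>form_kernel p \<mu>. orthogonal x y}"
  have dim_Zp: "dim ?Zp = DIM('v) - dim (form_kernel p \<mu>)"
    using dim_subspace_orthogonal_to_vectors[OF subspace_form_kernel[OF form p] subspace_UNIV subset_UNIV]
    by simp
  show ?thesis
  proof (rule form_pullback_kernel_complement[OF form p])
    fix f assume f: "linear f" "range f \<subseteq> ?Zp" "\<And>v. \<mu> v = \<mu> (f \<circ> v)"
    show ?thesis unfolding form_rank_def
    proof (rule Least_equality)
      show "\<exists>(W::'v set) (f::'v \<Rightarrow> 'v) \<nu>. subspace W \<and> dim W = DIM('v) - dim (form_kernel p \<mu>) \<and>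
          linear f \<and> range f \<subseteq> W \<and> is_form p \<nu> \<and> (\<forall>v. \<mu> v = \<nu> (f \<circ> v))"
      proof (intro exI conjI allI)
        show "subspace ?Zp" by (rule subspace_orthogonal_to_vectors)
      qed (fact dim_Zp f(1,2) form f(3))+
    next
      fix d assume "\<exists>(W::'v set) (f::'v \<Rightarrow> 'v) \<nu>. subspace W \<and> dim W = d \<and>
          linear f \<and> range f \<subseteq> W \<and> is_form p \<nu> \<and> (\<forall>v. \<mu> v = \<nu> (f \<circ> v))"
      then obtain W :: "'v set" and f :: "'v \<Rightarrow> 'v" and \<nu> where W: "subspace W" "dim W = d"
        and f: "linear f" "range f \<subseteq> W" and \<nu>: "is_form p \<nu>" and pullback: "\<forall>v. \<mu> v = \<nu> (f \<circ> v)"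
        by auto
      show "DIM('v) - dim (form_kernel p \<mu>) \<le> d"
        using form_kernel_complement_bound[OF form p W(1) f \<nu> pullback] W(2) by simp
    qed
  qed
qed

lemma form_kernel_subset_div_space:
  fixes \<mu> :: "(nat \<Rightarrow> 'v::euclidean_space) \<Rightarrow> real"
  assumes form: "is_form p \<mu>" and nonzero: "\<mu> \<noteq> (\<lambda>v. 0)"
  shows "form_kernel p \<mu> \<subseteq> div_space UNIV p \<mu>"
  unfolding div_space_UNIV_eq
proof (intro subsetI CollectI ballI)
  fix x \<eta> assume x: "x \<in> form_kernel p \<mu>" and "\<eta> \<in> div_polar p \<mu>"
  then have \<eta>: "linear \<eta>" and wedge: "wedge 1 p (one_form \<eta>) \<mu> = (\<lambda>v. 0)"
    unfolding div_polar_def by auto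
  show "\<eta> x = 0"
  proof (rule ccontr)
    assume "\<eta> x \<noteq> 0"
    define y where "y = (1 / \<eta> x) *\<^sub>R x"
    have y: "\<eta> y = 1" using \<eta> \<open>\<eta> x \<noteq> 0\<close> unfolding y_def by (simp add: linear_scale)
    have vanish: "\<mu> v = 0" if "\<forall>i<p. \<eta> (v i) = 0" for v
      using wedge_one_form_eq_0_iff[OF \<eta> form y] wedge that by blast
    have "\<mu> v = 0" for v
    proof (cases "p = 0")
      case False
      have "y \<in> form_kernel p \<mu>"
        unfolding y_def using subspace_mul[OF subspace_form_kernel[OF form] x] False by simp
      then have "\<mu> v = \<mu> (\<lambda>i. v i - \<eta> (v i) *\<^sub>R y)"
        using False subspace_mul[OF subspace_form_kernel[OF form]]
        by (intro form_cong_mod_kernel[OF form]) auto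
      also have "\<dots> = 0"
        by (rule vanish) (use \<eta> y in \<open>simp add: linear_diff linear_scale\<close>)
      finally show ?thesis .
    qed (use vanish in simp)
    with nonzero show False by auto
  qed
qed

lemma polar_frame_exists:
  fixes \<mu> :: "(nat \<Rightarrow> 'v::euclidean_space) \<Rightarrow> real"
  assumes form: "is_form p \<mu>" and nonzero: "\<mu> \<noteq> (\<lambda>v. 0)"
    and basis: "fun_basis_of s \<xi> (div_polar p \<mu>)" and s: "s \<le> DIM('v)"
  obtains e where "polar_frame p \<mu> s \<xi> e"
proof -
  have lin: "\<And>k. k < s \<Longrightarrow> linear (\<xi> k)" by (rule fun_basis_of_div_polar(1)[OF basis])
  have "fun_lin_indep s \<xi>" using basis unfolding fun_basis_of_def by blast
  then obtain e where "\<forall>k<s. \<forall>j<s. \<xi> k (e j) = (if k = j then 1 else 0)"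
    using dual_vectors_exist[where \<xi> = \<xi> and s = s, OF lin _ s] by blast
  then have "polar_frame p \<mu> s \<xi> e" using form nonzero basis by unfold_locales auto
  then show ?thesis by (rule that)
qed

lemma factorization_in_dual_basis:
  fixes \<mu> :: "(nat \<Rightarrow> 'v::euclidean_space) \<Rightarrow> real"
  assumes form: "is_form p \<mu>" and nonzero: "\<mu> \<noteq> (\<lambda>v. 0)" and "s \<le> DIM('v)"
    and full: "fun_basis_of DIM('v) \<xi> {\<eta>. linear \<eta>}" and basis: "fun_basis_of s \<xi> (div_polar p \<mu>)"
  shows "\<exists>\<zeta>. is_form (p - s) \<zeta> \<and> \<mu> = wedge s (p - s) (wedge_list s \<xi>) \<zeta> \<and>
      indivisible_in UNIV (p - s) \<zeta> \<and> (\<exists>(m::nat) c g. (\<forall>j<m. \<forall>k<p - s. s \<le> g j k \<and> g j k < DIM('v)) \<and>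
      \<zeta> = (\<lambda>v. \<Sum>j<m. c j * wedge_list (p - s) (\<lambda>k. \<xi> (g j k)) v))"
proof -
  have lin: "\<And>k. k < DIM('v) \<Longrightarrow> linear (\<xi> k)" and "fun_lin_indep DIM('v) \<xi>"
    using full unfolding fun_basis_of_def by auto
  then obtain e where dual_n: "\<And>k j. k < DIM('v) \<Longrightarrow> j < DIM('v) \<Longrightarrow> \<xi> k (e j) = (if k = j then 1 else 0)"
    using dual_vectors_exist[where \<xi> = \<xi> and s = "DIM('v)", OF lin] by blast
  interpret polar_frame p \<mu> s \<xi> e
    using form nonzero basis dual_n \<open>s \<le> DIM('v)\<close> by unfold_locales auto
  obtain \<zeta> where \<zeta>: "is_form (p - s) \<zeta>" "\<mu> = wedge s (p - s) (wedge_list s \<xi>) \<zeta>"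
    and sum: "\<exists>(m::nat) c g. (\<forall>j<m. \<forall>k<p - s. s \<le> g j k \<and> g j k < DIM('v)) \<and>
      \<zeta> = (\<lambda>v. \<Sum>j<m. c j * wedge_list (p - s) (\<lambda>k. \<xi> (g j k)) v)"
    using factorization_in_basis[OF full dual_n \<open>s \<le> DIM('v)\<close>] by blast
  show ?thesis
  proof (rule exI[of _ \<zeta>], intro conjI)
    show "indivisible_in UNIV (p - s) \<zeta>" by (rule factor_indivisible[OF \<zeta>])
  qed (fact \<zeta> sum)+
qed

lemma factor_unique_on_div_space:
  fixes \<mu> :: "(nat \<Rightarrow> 'v::euclidean_space) \<Rightarrow> real"
  assumes form: "is_form p \<mu>" and nonzero: "\<mu> \<noteq> (\<lambda>v. 0)" and s: "s \<le> DIM('v)"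
    and factor: "fun_basis_of s \<xi> (div_polar p \<mu>)" "is_form (p - s) \<zeta>"
      "\<mu> = wedge s (p - s) (wedge_list s \<xi>) \<zeta>"
    and factor': "fun_basis_of s \<xi>' (div_polar p \<mu>)" "is_form (p - s) \<zeta>'"
      "\<mu> = wedge s (p - s) (wedge_list s \<xi>') \<zeta>'"
  shows "\<exists>c. c \<noteq> 0 \<and> (\<forall>v. (\<forall>i<p - s. v i \<in> div_space UNIV p \<mu>) \<longrightarrow> \<zeta>' v = c * \<zeta> v)"
proof -
  obtain e e' where "polar_frame p \<mu> s \<xi> e" "polar_frame p \<mu> s \<xi>' e'"
    using polar_frame_exists[OF form nonzero factor(1) s] polar_frame_exists[OF form nonzero factor'(1) s]
    by metis
  then show ?thesis by (rule polar_frame.factor_unique_on_D) (fact factor factor')+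
qed

lemma factor_indivisible_on_div_space:
  fixes \<mu> :: "(nat \<Rightarrow> 'v::euclidean_space) \<Rightarrow> real"
  assumes form: "is_form p \<mu>" and nonzero: "\<mu> \<noteq> (\<lambda>v. 0)" and s: "s \<le> DIM('v)"
    and factor: "fun_basis_of s \<xi> (div_polar p \<mu>)" "is_form (p - s) \<zeta>"
      "\<mu> = wedge s (p - s) (wedge_list s \<xi>) \<zeta>"
  shows "indivisible_in (div_space UNIV p \<mu>) (p - s) \<zeta>"
proof (rule polar_frame_exists[OF form nonzero factor(1) s])
  fix e assume "polar_frame p \<mu> s \<xi> e"
  then show ?thesis by (rule polar_frame.factor_indivisible_on_D) (fact factor)+
qed

theorem lemma4p1:
  fixes \<mu> :: "(nat \<Rightarrow> 'v::euclidean_space) \<Rightarrow> real" and p :: nat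
  defines "n \<equiv> DIM('v)"
    and "r \<equiv> form_rank p \<mu>"
    and "Z \<equiv> form_kernel p \<mu>"
    and "D \<equiv> div_space UNIV p \<mu>"
    and "D' \<equiv> div_polar p \<mu>"
    and "s \<equiv> DIM('v) - dim (div_space UNIV p \<mu>)"
  assumes form: "is_form p \<mu>" and nonzero: "\<mu> \<noteq> (\<lambda>v. 0)"
  shows "(dim Z = n - r \<and> s \<le> r) \<and>
    (int s \<noteq> int p - 1 \<and> s \<le> p \<and> (s = p \<longleftrightarrow> decomposable p \<mu>)) \<and>
    (\<forall>\<xi>. fun_basis_of n \<xi> {\<eta>. linear \<eta>} \<and> fun_basis_of s \<xi> D' \<longrightarrow>
           (\<exists>\<zeta>. is_form (p - s) \<zeta> \<and> \<mu> = wedge s (p - s) (wedge_list s \<xi>) \<zeta> \<and>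
                indivisible_in UNIV (p - s) \<zeta> \<and>
                (\<exists>(m::nat) c g. (\<forall>j<m. \<forall>k<p - s. s \<le> g j k \<and> g j k < n) \<and>
                   \<zeta> = (\<lambda>v. \<Sum>j<m. c j * wedge_list (p - s) (\<lambda>k. \<xi> (g j k)) v)))) \<and>
    (\<forall>\<xi> \<zeta> \<xi>' \<zeta>'.
           fun_basis_of s \<xi> D' \<and> is_form (p - s) \<zeta> \<and> \<mu> = wedge s (p - s) (wedge_list s \<xi>) \<zeta> \<and>
           fun_basis_of s \<xi>' D' \<and> is_form (p - s) \<zeta>' \<and> \<mu> = wedge s (p - s) (wedge_list s \<xi>') \<zeta>'
           \<longrightarrow> (\<exists>c. c \<noteq> 0 \<and> (\<forall>v. (\<forall>i<p - s. v i \<in> D) \<longrightarrow> \<zeta>' v = c * \<zeta> v))) \<and>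
    (\<forall>\<xi> \<zeta>. fun_basis_of s \<xi> D' \<and> is_form (p - s) \<zeta> \<and> \<mu> = wedge s (p - s) (wedge_list s \<xi>) \<zeta>
           \<longrightarrow> indivisible_in D (p - s) \<zeta>)"
proof -
  have s: "s \<le> DIM('v)" unfolding s_def by simp
  obtain \<xi>\<^sub>0 where "fun_basis_of s \<xi>\<^sub>0 D'"
    using div_polar_basis_exists[of p \<mu>] unfolding s_def D'_def by blast
  then obtain e\<^sub>0 where "polar_frame p \<mu> s \<xi>\<^sub>0 e\<^sub>0"
    using polar_frame_exists[OF form nonzero _ s] unfolding D'_def by blast
  have "dim Z = n - r \<and> s \<le> r"
    using form_rank_eq[OF form] dim_subset[OF form_kernel_subset_div_space[OF form nonzero]]
      dim_subset_UNIV[of Z]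
    unfolding r_def n_def Z_def s_def by simp
  moreover have "int s \<noteq> int p - 1 \<and> s \<le> p \<and> (s = p \<longleftrightarrow> decomposable p \<mu>)"
    using polar_frame.polar_dim_properties[OF \<open>polar_frame p \<mu> s \<xi>\<^sub>0 e\<^sub>0\<close>] .
  ultimately show ?thesis
    using factorization_in_dual_basis[OF form nonzero s] factor_unique_on_div_space[OF form nonzero s]
      factor_indivisible_on_div_space[OF form nonzero s]
    unfolding n_def D_def D'_def by blast
qed

end
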